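(* Let $q\in\mathbb{N}$ with $q\ge 2$. Let $A,B\subset(0,\infty)$ be compact intervals which are admissible, i.e. $\operatorname{diam}(A)\le\operatorname{dist}(A,0)$ and $\operatorname{diam}(B)\le\operatorname{dist}(B,0)$. Let $\kappa\colon A\times B\to\mathbb{R}$ be asymptotically smooth with constants $C,\mu,s\ge 0$ and $\nu\in\mathbb{R}$, meaning that $\kappa$ is infinitely differentiable in each variable and for all $q'\in\mathbb{N}$ and all $(y,\xi)\in A\times B$ $$\left|y^{q'}\partial_y^{q'}\kappa(y,\xi)\right|\le C\,q'!\,\mu^{q'}(q')^{\nu}(y\xi)^{-s}\quad\text{and}\quad \left|\xi^{q'}\partial_\xi^{q'}\kappa(y,\xi)\right|\le C\,q'!\,\mu^{q'}(q')^{\nu}(y\xi)^{-s}.$$ Then $$\left\|\kappa-\mathcal{I}_q^{A\times B}\kappa\right\|_{C(A\times B)}\le \frac{C\mu^q q^{\nu}}{2^{2q-1}}\left(2+\frac{2}{\pi}\log q\right)\bigl(\operatorname{dist}(A,0)\operatorname{dist}(B,0)\bigr)^{-s}.$$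
   Context: For $q\in\mathbb{N}$ let $t_j=\cos\frac{(2j+1)\pi}{2q}$, $j=0,\dots,q-1$ (zeros of the $q$-th Chebyshev polynomial of the first kind). For an interval $A=[a,b]$, $a<b$, let $\operatorname{diam}A=b-a$, $c^A=\frac{a+b}{2}$, and the Chebyshev nodes $y_j^A=c^A+\frac{\operatorname{diam}A}{2}t_j$, $j=0,\dots,q-1$. The Lagrange polynomials are $L_r^A(y)=\prod_{j\ne r}\frac{y-y_j^A}{y_r^A-y_j^A}$, $r=0,\dots,q-1$, and the interpolation operator is $\mathcal{I}_q^A g=\sum_{j=0}^{q-1}g(y_j^A)L_j^A$ for $g\in C(A)$. For intervals $A,B$ and $\kappa\colon A\times B\to\mathbb{R}$, the tensor interpolation is $\mathcal{I}_q^{A\times B}\kappa(y,\xi)=\sum_{s=0}^{q-1}\sum_{r=0}^{q-1}L_s^A(y)\,\kappa(y_s^A,\xi_r^B)\,L_r^B(\xi)$, where $\xi_r^B$ are the Chebyshev nodes of $B$. $\|\cdot\|_{C(A\times B)}$ is the supremum norm, and $\operatorname{dist}(A,0)=\min_{y\in A}|y|$. *)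

theory Defs
  imports "HOL-Analysis.Analysis"
begin

definition cheb_node :: "nat \<Rightarrow> real \<Rightarrow> real \<Rightarrow> nat \<Rightarrow> real" where
  "cheb_node q a b j = (a + b) / 2 + (b - a) / 2 * cos ((2 * real j + 1) * pi / (2 * real q))"

definition lagrange_cheb :: "nat \<Rightarrow> real \<Rightarrow> real \<Rightarrow> nat \<Rightarrow> real \<Rightarrow> real" where
  "lagrange_cheb q a b r y =
     (\<Prod>j\<in>{0..<q} - {r}. (y - cheb_node q a b j) / (cheb_node q a b r - cheb_node q a b j))"

definition tensor_interp ::
  "nat \<Rightarrow> real \<Rightarrow> real \<Rightarrow> real \<Rightarrow> real \<Rightarrow> (real \<Rightarrow> real \<Rightarrow> real) \<Rightarrow> real \<Rightarrow> real \<Rightarrow> real" where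
  "tensor_interp q a b c d \<kappa> y \<xi> =
     (\<Sum>s<q. \<Sum>r<q. lagrange_cheb q a b s y * \<kappa> (cheb_node q a b s) (cheb_node q c d r)
                     * lagrange_cheb q c d r \<xi>)"

text \<open>Asymptotic smoothness on A x B: kappa is infinitely differentiable in each variable
  (Dy n, Dx n are the n-th partial derivatives, one-sided at endpoints, i.e. within A resp. B),
  and the derivative bounds hold for all q' >= 1.\<close>
definition asymptotically_smooth ::
  "real set \<Rightarrow> real set \<Rightarrow> (real \<Rightarrow> real \<Rightarrow> real) \<Rightarrow> real \<Rightarrow> real \<Rightarrow> real \<Rightarrow> real \<Rightarrow> bool" where
  "asymptotically_smooth A B \<kappa> C \<mu> \<nu> s \<longleftrightarrow>
    (\<exists>Dy Dx :: nat \<Rightarrow> real \<Rightarrow> real \<Rightarrow> real.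
       (\<forall>y\<in>A. \<forall>\<xi>\<in>B. Dy 0 y \<xi> = \<kappa> y \<xi> \<and> Dx 0 y \<xi> = \<kappa> y \<xi>) \<and>
       (\<forall>n. \<forall>y\<in>A. \<forall>\<xi>\<in>B.
          ((\<lambda>t. Dy n t \<xi>) has_real_derivative Dy (Suc n) y \<xi>) (at y within A) \<and>
          ((\<lambda>t. Dx n y t) has_real_derivative Dx (Suc n) y \<xi>) (at \<xi> within B)) \<and>
       (\<forall>n\<ge>1. \<forall>y\<in>A. \<forall>\<xi>\<in>B.
          \<bar>y ^ n * Dy n y \<xi>\<bar> \<le> C * fact n * \<mu> ^ n * real n powr \<nu> * (y * \<xi>) powr (- s) \<and>
          \<bar>\<xi> ^ n * Dx n y \<xi>\<bar> \<le> C * fact n * \<mu> ^ n * real n powr \<nu> * (y * \<xi>) powr (- s)))"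

end

theory Submission
  imports Defs "HOL-Computational_Algebra.Polynomial"
begin

text \<open>Tensor interpolation interpolates first in \<open>\<xi>\<close> and then in \<open>y\<close>, so
  \<open>\<kappa> - I_AxB \<kappa> = (\<kappa> - I_A \<kappa>) + I_A (\<kappa> - I_B \<kappa>)\<close> and the error is at most \<open>(1 + \<Lambda>) E\<close>,
  where \<open>E\<close> bounds both one-dimensional errors and \<open>\<Lambda>\<close> is the Lebesgue constant of the nodes.

  In one variable the remainder is \<open>\<kappa>^(q)(\<eta>) / q! * \<Prod>(y - y_j)\<close>. The node polynomial is a
  rescaled Chebyshev polynomial, so it is bounded by \<open>2 (diam A / 4)^q\<close>; asymptotic smoothness
  bounds \<open>\<kappa>^(q)(\<eta>)\<close> by \<open>C q! \<mu>^q q^\<nu> (ac)^(-s) / \<eta>^q\<close>, and admissibility gives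
  \<open>diam A \<le> \<eta>\<close>, whence \<open>E = C \<mu>^q q^\<nu> (ac)^(-s) / 2^(2q-1)\<close>.

  For \<open>\<Lambda> \<le> 1 + 2/\<pi> ln q\<close>, write \<open>t = cos x\<close>. Then
  \<open>|L_j(t)| = |cos qx| sin \<theta>_j / (q |cos x - cos \<theta>_j|)\<close>, which splits into two cotangents;
  by periodicity the resulting \<open>2q\<close> terms regroup into pairs \<open>cot (h (k + u)) + cot (h (k + 1 - u))\<close>
  with \<open>h = \<pi>/2q\<close>, each at most \<open>2 cot (h (k + 1/2)) / sin (\<pi> u)\<close>, while \<open>|cos qx| = sin (\<pi> u)\<close>.
  The remaining midpoint sum of \<open>cot\<close> is compared with \<open>\<integral> cot = ln sin\<close>, leaving a numerical
  estimate for its first term.\<close>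

section \<open>Remainder of Lagrange interpolation\<close>

lemma Rolle_finite_zeros:
  fixes f f' :: "real \<Rightarrow> real"
  assumes cont: "continuous_on {a..b} f"
    and der: "\<And>x. a < x \<Longrightarrow> x < b \<Longrightarrow> (f has_real_derivative f' x) (at x)"
  shows "finite S \<Longrightarrow> S \<subseteq> {a..b} \<Longrightarrow> card S = Suc k \<Longrightarrow> (\<forall>x\<in>S. f x = 0) \<Longrightarrow>
    \<exists>T. finite T \<and> card T = k \<and> T \<subseteq> {a..b} \<and> (\<forall>x\<in>T. x < Max S) \<and> (\<forall>x\<in>T. f' x = 0)"
proof (induction k arbitrary: S)
  case 0
  then show ?case by (intro exI[of _ "{}"]) auto
next
  case (Suc k)
  define m where "m = Max S"
  define S0 where "S0 = S - {m}"
  have ne: "S \<noteq> {}" using Suc.prems by auto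
  have mS: "m \<in> S" using Suc.prems ne m_def by auto
  have cS0: "card S0 = Suc k" using Suc.prems mS S0_def by auto
  have fS0: "finite S0" "S0 \<subseteq> {a..b}" "\<forall>x\<in>S0. f x = 0" using Suc.prems S0_def by auto
  obtain T0 where T0: "finite T0" "card T0 = k" "T0 \<subseteq> {a..b}" "\<forall>x\<in>T0. x < Max S0"
      "\<forall>x\<in>T0. f' x = 0"
    using Suc.IH[OF fS0(1,2) cS0 fS0(3)] by blast
  define m0 where "m0 = Max S0"
  have ne0: "S0 \<noteq> {}" using cS0 by auto
  have m0S0: "m0 \<in> S0" using fS0 ne0 m0_def by auto
  have m0m: "m0 < m"
  proof -
    have "m0 \<in> S" "m0 \<noteq> m" using m0S0 S0_def by auto
    moreover then have "m0 \<le> m" unfolding m_def using Suc.prems(1) by (intro Max_ge) auto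
    ultimately show ?thesis by auto
  qed
  have "m0 \<in> {a..b}" "m \<in> {a..b}" using m0S0 S0_def Suc.prems(2) mS by blast+
  then have ab: "a \<le> m0" "m \<le> b" by auto
  have "\<exists>z. m0 < z \<and> z < m \<and> DERIV f z :> 0"
  proof (rule Rolle[OF m0m])
    show "f m0 = f m" using fS0(3) m0S0 mS Suc.prems(4) by auto
    show "continuous_on {m0..m} f" using ab by (intro continuous_on_subset[OF cont]) auto
    show "\<And>x. m0 < x \<Longrightarrow> x < m \<Longrightarrow> f differentiable at x"
      using der ab real_differentiable_def by (meson le_less_trans less_le_trans)
  qed
  then obtain z where z: "m0 < z" "z < m" "DERIV f z :> 0" by blast
  have f'z: "f' z = 0" using der[of z] z ab by (meson DERIV_unique le_less_trans less_le_trans)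
  have znot: "z \<notin> T0" using T0(4) z m0_def by auto
  show ?case
  proof (intro exI[of _ "insert z T0"] conjI)
    show "card (insert z T0) = Suc k" using T0 znot by auto
    show "insert z T0 \<subseteq> {a..b}" using T0 z ab by auto
    show "\<forall>x\<in>insert z T0. x < Max S" using T0(4) z m0m m_def m0_def by auto
    show "\<forall>x\<in>insert z T0. f' x = 0" using T0 f'z by auto
  qed (use T0 in auto)
qed

lemma higher_Rolle:
  fixes F :: "nat \<Rightarrow> real \<Rightarrow> real"
  assumes der: "\<And>k x. k < n \<Longrightarrow> a < x \<Longrightarrow> x < b \<Longrightarrow> (F k has_real_derivative F (Suc k) x) (at x)"
    and cont: "\<And>k. k < n \<Longrightarrow> continuous_on {a..b} (F k)"
    and S: "finite S" "S \<subseteq> {a..b}" "card S = Suc n" "\<forall>x\<in>S. F 0 x = 0"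
  shows "\<exists>z\<in>{a..b}. F n z = 0"
proof -
  have "m \<le> n \<Longrightarrow> \<exists>T. finite T \<and> card T = Suc (n - m) \<and> T \<subseteq> {a..b} \<and> (\<forall>x\<in>T. F m x = 0)" for m
  proof (induction m)
    case 0 then show ?case using S by auto
  next
    case (Suc m)
    then obtain T where T: "finite T" "card T = Suc (n - m)" "T \<subseteq> {a..b}" "\<forall>x\<in>T. F m x = 0"
      by auto
    have "m < n" using Suc.prems by auto
    have "\<exists>T'. finite T' \<and> card T' = n - m \<and> T' \<subseteq> {a..b} \<and> (\<forall>x\<in>T'. x < Max T) \<and>
        (\<forall>x\<in>T'. F (Suc m) x = 0)"
      by (rule Rolle_finite_zeros[OF cont der, of m T "n - m"]) (use T \<open>m < n\<close> in auto)
    moreover have "n - m = Suc (n - Suc m)" using Suc.prems by auto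
    ultimately show ?case by metis
  qed
  from this[of n] obtain T where "card T = Suc 0" "T \<subseteq> {a..b}" "\<forall>x\<in>T. F n x = 0" by auto
  moreover from \<open>card T = Suc 0\<close> obtain z where "T = {z}" using card_1_singletonE by auto
  ultimately show ?thesis by auto
qed

lemma funpow_pderiv_degree_le:
  fixes p :: "real poly"
  shows "degree p \<le> n \<Longrightarrow> (pderiv ^^ n) p = [: fact n * coeff p n :]"
proof (induction n arbitrary: p)
  case 0
  then obtain c where "p = [:c:]" using degree0_coeffs by auto
  then show ?case by simp
next
  case (Suc n)
  have "degree (pderiv p) \<le> n" using Suc.prems by (simp add: degree_pderiv)
  then have "(pderiv ^^ n) (pderiv p) = [: fact n * coeff (pderiv p) n :]" by (rule Suc.IH)
  moreover have "(pderiv ^^ Suc n) p = (pderiv ^^ n) (pderiv p)"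
    by (rule funpow_Suc_right[THEN fun_cong, unfolded o_apply])
  moreover have "fact n * coeff (pderiv p) n = fact (Suc n) * coeff p (Suc n)"
    by (simp add: coeff_pderiv)
  ultimately show ?case by simp
qed

lemma degree_prod_linear_factors:
  fixes ys :: "nat \<Rightarrow> real"
  shows "degree (\<Prod>j<q. [:-ys j, 1:]) = q" and "coeff (\<Prod>j<q. [:-ys j, 1:]) q = 1"
proof -
  have "degree (\<Prod>j<q. [:-ys j, 1:]) = (\<Sum>j<q. degree [:-ys j, 1:])"
    by (rule degree_prod_eq_sum_degree) auto
  then show deg: "degree (\<Prod>j<q. [:-ys j, 1:]) = q" by simp
  have "lead_coeff (\<Prod>j<q. [:-ys j, 1:]) = (\<Prod>j<q. lead_coeff [:-ys j, 1:])"
    by (rule lead_coeff_prod)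
  then show "coeff (\<Prod>j<q. [:-ys j, 1:]) q = 1" using deg by simp
qed

lemma lagrange_basis_at_node:
  fixes ys :: "nat \<Rightarrow> real"
  assumes inj: "inj_on ys {..<q}" and "j < q" "k < q"
  shows "(\<Prod>i\<in>{0..<q}-{j}. (ys k - ys i) / (ys j - ys i)) = (if j = k then 1 else 0)"
proof (cases "j = k")
  case True
  have "ys j \<noteq> ys i" if "i \<in> {0..<q}-{j}" for i
    using inj \<open>j < q\<close> that by (auto dest: inj_onD)
  then show ?thesis using True by simp
next
  case False
  then have "k \<in> {0..<q}-{j}" using assms by auto
  then have "(\<Prod>i\<in>{0..<q}-{j}. (ys k - ys i) / (ys j - ys i)) = 0" by (intro prod_zero) auto
  then show ?thesis using False by simp
qed

lemma lagrange_interpolation_poly: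
  fixes ys v :: "nat \<Rightarrow> real"
  assumes q1: "q \<ge> 1" and inj: "inj_on ys {..<q}"
  obtains P where "degree P < q"
    and "\<And>x. poly P x = (\<Sum>j<q. v j * (\<Prod>i\<in>{0..<q}-{j}. (x - ys i) / (ys j - ys i)))"
    and "\<And>k. k < q \<Longrightarrow> poly P (ys k) = v k"
proof
  define L where "L j = (\<Prod>i\<in>{0..<q}-{j}. smult (1/(ys j - ys i)) [:-ys i, 1:])" for j
  define P where "P = (\<Sum>j<q. smult (v j) (L j))"
  have polyL: "poly (L j) x = (\<Prod>i\<in>{0..<q}-{j}. (x - ys i) / (ys j - ys i))" for j x
    unfolding L_def poly_prod by (intro prod.cong) (auto simp: diff_divide_distrib)
  show polyP: "poly P x = (\<Sum>j<q. v j * (\<Prod>i\<in>{0..<q}-{j}. (x - ys i) / (ys j - ys i)))" for x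
    unfolding P_def poly_sum by (simp add: polyL)
  show "poly P (ys k) = v k" if "k < q" for k
  proof -
    have "poly P (ys k) = (\<Sum>j<q. if k = j then v k else 0)"
      unfolding polyP using lagrange_basis_at_node[OF inj _ that] by (intro sum.cong) auto
    then show ?thesis using that by simp
  qed
  have "degree (L j) \<le> q - 1" if "j < q" for j
  proof -
    have "degree (L j) \<le> (\<Sum>i\<in>{0..<q}-{j}. degree (smult (1/(ys j - ys i)) [:-ys i, 1:]))"
      unfolding L_def by (rule order.trans[OF degree_prod_sum_le]) auto
    also have "\<dots> \<le> (\<Sum>i\<in>{0..<q}-{j}. 1)"
      by (intro sum_mono) (simp add: degree_smult_le)
    also have "\<dots> = q - 1" using that by simp
    finally show ?thesis .
  qed
  then show "degree P < q"
    unfolding P_def using q1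
    by (intro le_less_trans[OF degree_sum_le]) (auto intro: order.trans[OF degree_smult_le])
qed

lemma higher_Rolle_minus_poly:
  fixes D :: "nat \<Rightarrow> real \<Rightarrow> real" and p :: "real poly"
  assumes der: "\<And>k x. x \<in> {a..b} \<Longrightarrow> (D k has_real_derivative D (Suc k) x) (at x within {a..b})"
    and S: "finite S" "S \<subseteq> {a..b}" "card S = Suc n" "\<forall>x\<in>S. D 0 x = poly p x"
  shows "\<exists>\<eta>\<in>{a..b}. D n \<eta> = poly ((pderiv ^^ n) p) \<eta>"
proof -
  define F where "F k x = D k x - poly ((pderiv ^^ k) p) x" for k x
  have "(F k has_real_derivative F (Suc k) x) (at x)" if "a < x" "x < b" for k x
  proof -
    have "(D k has_real_derivative D (Suc k) x) (at x)"
      using der[of x k] that at_within_Icc_at[of a x b] by auto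
    then show ?thesis unfolding F_def by (auto intro!: derivative_eq_intros)
  qed
  moreover have "continuous_on {a..b} (F k)" for k
  proof -
    have "continuous_on {a..b} (D k)" by (rule DERIV_continuous_on[OF der])
    then show ?thesis unfolding F_def by (intro continuous_intros)
  qed
  ultimately have "\<exists>\<eta>\<in>{a..b}. F n \<eta> = 0" using S unfolding F_def by (intro higher_Rolle) auto
  then show ?thesis unfolding F_def by simp
qed

text \<open>The classical argument: with P the interpolant and W the node polynomial, the function
  D 0 agrees with the polynomial P + K W at the q + 1 points y and y_j for a suitable K,
  so D q agrees somewhere with its q-th derivative K q!.\<close>
lemma lagrange_interpolation_remainder:
  fixes D :: "nat \<Rightarrow> real \<Rightarrow> real" and ys :: "nat \<Rightarrow> real"
  assumes ab: "a < b" and q1: "q \<ge> 1"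
    and inj: "inj_on ys {..<q}" and ysab: "\<And>j. j < q \<Longrightarrow> ys j \<in> {a..b}"
    and der: "\<And>n x. x \<in> {a..b} \<Longrightarrow> (D n has_real_derivative D (Suc n) x) (at x within {a..b})"
    and y: "y \<in> {a..b}"
  shows "\<exists>\<eta>\<in>{a..b}. D 0 y - (\<Sum>j<q. D 0 (ys j) * (\<Prod>i\<in>{0..<q}-{j}. (y - ys i)/(ys j - ys i)))
            = D q \<eta> / fact q * (\<Prod>j<q. (y - ys j))"
proof -
  obtain P where degP: "degree P < q"
    and polyP: "\<And>x. poly P x = (\<Sum>j<q. D 0 (ys j) * (\<Prod>i\<in>{0..<q}-{j}. (x - ys i) / (ys j - ys i)))"
    and Pnode: "\<And>k. k < q \<Longrightarrow> poly P (ys k) = D 0 (ys k)"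
    using lagrange_interpolation_poly[OF q1 inj, of "\<lambda>j. D 0 (ys j)"] by blast
  define W where "W = (\<Prod>j<q. [:-ys j, 1:])"
  have polyW: "poly W x = (\<Prod>j<q. (x - ys j))" for x
    unfolding W_def poly_prod by simp
  show ?thesis
  proof (cases "y \<in> ys ` {..<q}")
    case True
    then obtain k where k: "k < q" "y = ys k" by auto
    have "(\<Prod>j<q. (y - ys j)) = 0" using k by (intro prod_zero) auto
    then show ?thesis using Pnode k polyP ab by (intro bexI[of _ a]) auto
  next
    case False
    have W0: "poly W y \<noteq> 0" unfolding polyW using False by (auto simp: prod_zero_iff)
    define K where "K = (D 0 y - poly P y) / poly W y"
    define S where "S = insert y (ys ` {..<q})"
    have "finite S" "card S = Suc q" unfolding S_def using False inj by (simp_all add: card_image)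
    moreover have "S \<subseteq> {a..b}" unfolding S_def using y ysab by auto
    moreover have "\<forall>x\<in>S. D 0 x = poly (P + smult K W) x"
    proof
      fix x assume "x \<in> S"
      then consider "x = y" | k where "k < q" "x = ys k" unfolding S_def by auto
      then show "D 0 x = poly (P + smult K W) x"
      proof cases
        case 1 then show ?thesis unfolding K_def using W0 by simp
      next
        case 2
        have "poly W x = 0" unfolding polyW using 2 by (intro prod_zero) auto
        then show ?thesis using Pnode 2 by simp
      qed
    qed
    ultimately obtain \<eta> where \<eta>: "\<eta> \<in> {a..b}" "D q \<eta> = poly ((pderiv ^^ q) (P + smult K W)) \<eta>"
      using higher_Rolle_minus_poly[where D=D and n=q, OF der] by blast
    have "degree (P + smult K W) \<le> q"
      using degP degree_prod_linear_factors(1)[of ys q] unfolding W_def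
      by (intro degree_add_le order.trans[OF degree_smult_le]) auto
    moreover have "coeff (P + smult K W) q = K"
      using degP degree_prod_linear_factors(2)[of ys q] unfolding W_def by (simp add: coeff_eq_0)
    ultimately have "(pderiv ^^ q) (P + smult K W) = [: fact q * K :]"
      using funpow_pderiv_degree_le by metis
    then have "D q \<eta> = K * fact q" using \<eta>(2) by simp
    then have "D 0 y - poly P y = D q \<eta> / fact q * poly W y" unfolding K_def using W0 by simp
    then show ?thesis using \<eta>(1) polyP polyW by auto
  qed
qed

section \<open>Chebyshev polynomials and their zeros\<close>

definition cheb_angle :: "nat \<Rightarrow> nat \<Rightarrow> real" where
  "cheb_angle q j = (2 * real j + 1) * pi / (2 * real q)"

fun cheb_poly :: "nat \<Rightarrow> real poly" where
  "cheb_poly 0 = 1"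
| "cheb_poly (Suc 0) = [:0, 1:]"
| "cheb_poly (Suc (Suc n)) = [:0, 2:] * cheb_poly (Suc n) - cheb_poly n"

definition cheb_node_poly :: "nat \<Rightarrow> real poly" where
  "cheb_node_poly q = (\<Prod>j<q. [:- cos (cheb_angle q j), 1:])"

lemma cheb_node_eq: "cheb_node q a b j = (a + b) / 2 + (b - a) / 2 * cos (cheb_angle q j)"
  unfolding cheb_node_def cheb_angle_def by simp

lemma poly_cheb_poly_cos: "poly (cheb_poly n) (cos x) = cos (real n * x)"
proof (induction n rule: cheb_poly.induct)
  case (3 n)
  have "cos (real (Suc n) * x + x) + cos (real (Suc n) * x - x) = 2 * cos x * cos (real (Suc n) * x)"
    by (simp add: cos_add cos_diff)
  moreover have "real (Suc n) * x + x = real (Suc (Suc n)) * x" "real (Suc n) * x - x = real n * x"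
    by (simp_all add: algebra_simps)
  ultimately show ?case using 3 by simp
qed simp_all

lemma coeff_cheb_poly:
  "(\<forall>k>n. coeff (cheb_poly n) k = 0) \<and> coeff (cheb_poly n) n = (if n = 0 then 1 else 2 ^ (n - 1))"
proof (induction n rule: cheb_poly.induct)
  case 1 then show ?case by (simp add: coeff_eq_0)
next
  case 2 then show ?case by (auto simp: coeff_pCons split: nat.splits)
next
  case (3 n)
  have c2: "coeff ([:0, 2:] * p) (Suc k) = 2 * coeff p k" for p :: "real poly" and k
    by simp
  show ?case
  proof (intro conjI allI impI)
    fix k assume "k > Suc (Suc n)"
    then obtain k' where "k = Suc k'" "k' > Suc n" by (cases k) auto
    then show "coeff (cheb_poly (Suc (Suc n))) k = 0" using 3 by (simp add: c2)
  qed (use 3 in \<open>simp add: c2\<close>)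
qed

lemma cheb_angle_bounds: "j < q \<Longrightarrow> 0 < cheb_angle q j \<and> cheb_angle q j < pi"
proof -
  assume j: "j < q"
  have "(2 * real j + 1) * pi < (2 * real q) * pi" by (intro mult_strict_right_mono) (use j in auto)
  then show ?thesis unfolding cheb_angle_def using j by (auto simp: pos_divide_less_eq)
qed

lemma cheb_angle_times_q: "q > 0 \<Longrightarrow> real q * cheb_angle q j = real j * pi + pi / 2"
  unfolding cheb_angle_def by (simp add: field_simps)

lemma cos_cheb_angle_inj:
  assumes "i < q" "j < q" "cos (cheb_angle q i) = cos (cheb_angle q j)"
  shows "i = j"
proof -
  have "cheb_angle q i = cheb_angle q j"
    using cos_inj_pi cheb_angle_bounds assms by (meson less_eq_real_def)
  then show "i = j" using assms(1) unfolding cheb_angle_def by (simp add: divide_cancel_right)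
qed

lemma cheb_poly_eq_smult_node_poly:
  assumes q: "q \<ge> 1"
  shows "cheb_poly q = smult (2 ^ (q - 1)) (cheb_node_poly q)"
proof (rule ccontr)
  define R where "R = cheb_poly q - smult (2 ^ (q - 1)) (cheb_node_poly q)"
  assume "cheb_poly q \<noteq> smult (2 ^ (q - 1)) (cheb_node_poly q)"
  then have R0: "R \<noteq> 0" unfolding R_def by simp
  have deg: "degree (cheb_node_poly q) = q" and lc: "coeff (cheb_node_poly q) q = 1"
    using degree_prod_linear_factors[of "\<lambda>j. cos (cheb_angle q j)" q]
    unfolding cheb_node_poly_def by simp_all
  have "coeff R k = 0" if "k \<ge> q" for k
  proof (cases "k = q")
    case True then show ?thesis unfolding R_def using coeff_cheb_poly[of q] q lc by simp
  next
    case False then show ?thesis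
      unfolding R_def using coeff_cheb_poly[of q] deg that by (simp add: coeff_eq_0)
  qed
  then have "degree R < q" using R0 q by (metis leading_coeff_0_iff not_le)
  moreover have "(\<lambda>j. cos (cheb_angle q j)) ` {..<q} \<subseteq> {x. poly R x = 0}"
  proof
    fix x assume "x \<in> (\<lambda>j. cos (cheb_angle q j)) ` {..<q}"
    then obtain j where j: "j < q" "x = cos (cheb_angle q j)" by auto
    have "poly (cheb_node_poly q) x = 0"
      unfolding cheb_node_poly_def poly_prod using j by (intro prod_zero) auto
    moreover have "poly (cheb_poly q) x = 0"
      using j poly_cheb_poly_cos cheb_angle_times_q q by (simp add: cos_add)
    ultimately show "x \<in> {x. poly R x = 0}" unfolding R_def by simp
  qed
  then have "card ((\<lambda>j. cos (cheb_angle q j)) ` {..<q}) \<le> card {x. poly R x = 0}"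
    using poly_roots_finite[OF R0] by (intro card_mono) auto
  moreover have "card ((\<lambda>j. cos (cheb_angle q j)) ` {..<q}) = q"
    by (subst card_image) (auto intro!: inj_onI cos_cheb_angle_inj)
  ultimately show False using card_poly_roots_bound[OF R0] by linarith
qed

lemma prod_cos_minus_cheb_nodes:
  assumes "q \<ge> 1"
  shows "(\<Prod>j<q. (cos x - cos (cheb_angle q j))) = cos (real q * x) / 2 ^ (q - 1)"
proof -
  have "poly (cheb_poly q) (cos x) = 2 ^ (q - 1) * poly (cheb_node_poly q) (cos x)"
    using cheb_poly_eq_smult_node_poly[OF assms] by simp
  then show ?thesis
    unfolding cheb_node_poly_def poly_prod using poly_cheb_poly_cos[of q x] by (simp add: field_simps)
qed

lemma abs_prod_minus_cheb_nodes_le: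
  assumes "q \<ge> 1" "-1 \<le> t" "t \<le> 1"
  shows "\<bar>\<Prod>j<q. (t - cos (cheb_angle q j))\<bar> \<le> 1 / 2 ^ (q - 1)"
proof -
  have "t = cos (arccos t)" using assms by simp
  then have "(\<Prod>j<q. (t - cos (cheb_angle q j))) = cos (real q * arccos t) / 2 ^ (q - 1)"
    using prod_cos_minus_cheb_nodes[OF assms(1)] by metis
  then show ?thesis by (simp add: divide_right_mono)
qed

lemma poly_pderiv_cheb_poly_cos:
  "poly (pderiv (cheb_poly n)) (cos x) * sin x = real n * sin (real n * x)"
proof -
  have "((\<lambda>x. poly (cheb_poly n) (cos x)) has_real_derivative
      poly (pderiv (cheb_poly n)) (cos x) * (- sin x)) (at x)"
    by (auto intro!: derivative_eq_intros DERIV_chain2[OF poly_DERIV])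
  moreover have "(\<lambda>x. poly (cheb_poly n) (cos x)) = (\<lambda>x. cos (real n * x))"
    by (simp add: poly_cheb_poly_cos)
  moreover have "((\<lambda>x. cos (real n * x)) has_real_derivative - sin (real n * x) * real n) (at x)"
    by (auto intro!: derivative_eq_intros)
  ultimately have "poly (pderiv (cheb_poly n)) (cos x) * (- sin x) = - sin (real n * x) * real n"
    using DERIV_unique by metis
  then show ?thesis by (simp add: algebra_simps)
qed

lemma prod_cheb_node_differences:
  assumes q: "q \<ge> 1" and j: "j < q"
  shows "(\<Prod>i\<in>{0..<q}-{j}. (cos (cheb_angle q j) - cos (cheb_angle q i))) * sin (cheb_angle q j)
           * 2 ^ (q - 1) = real q * sin (real q * cheb_angle q j)"
proof -
  define c where "c i = cos (cheb_angle q i)" for i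
  define Qj where "Qj = (\<Prod>i\<in>{..<q}-{j}. [:- c i, 1:])"
  have om: "cheb_node_poly q = [:- c j, 1:] * Qj"
    unfolding cheb_node_poly_def Qj_def c_def using j by (subst prod.remove[of _ j]) auto
  have "pderiv (cheb_node_poly q) = [:- c j, 1:] * pderiv Qj + Qj"
    unfolding om pderiv_mult by (simp add: pderiv_pCons)
  then have "poly (pderiv (cheb_poly q)) (c j) = 2 ^ (q - 1) * poly Qj (c j)"
    using cheb_poly_eq_smult_node_poly[OF q] by (simp add: pderiv_smult)
  moreover have "poly (pderiv (cheb_poly q)) (c j) * sin (cheb_angle q j)
      = real q * sin (real q * cheb_angle q j)"
    unfolding c_def by (rule poly_pderiv_cheb_poly_cos)
  moreover have "poly Qj (c j) = (\<Prod>i\<in>{0..<q}-{j}. (cos (cheb_angle q j) - cos (cheb_angle q i)))"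
    unfolding Qj_def poly_prod c_def by (intro prod.cong) auto
  ultimately show ?thesis by (simp add: algebra_simps)
qed

text \<open>The numerator is the node polynomial with one factor removed, the denominator is its
  derivative at the node; both are read off from the Chebyshev polynomial.\<close>
lemma abs_cheb_lagrange_cos:
  assumes q: "q \<ge> 1" and j: "j < q"
    and nn: "\<And>i. i < q \<Longrightarrow> cos x \<noteq> cos (cheb_angle q i)"
  shows "\<bar>\<Prod>i\<in>{0..<q}-{j}. (cos x - cos (cheb_angle q i)) / (cos (cheb_angle q j) - cos (cheb_angle q i))\<bar>
          = \<bar>cos (real q * x)\<bar> * sin (cheb_angle q j) / (real q * \<bar>cos x - cos (cheb_angle q j)\<bar>)"
proof -
  define N where "N = (\<Prod>i\<in>{0..<q}-{j}. (cos x - cos (cheb_angle q i)))"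
  define M where "M = (\<Prod>i\<in>{0..<q}-{j}. (cos (cheb_angle q j) - cos (cheb_angle q i)))"
  have "(\<Prod>i<q. (cos x - cos (cheb_angle q i))) = (cos x - cos (cheb_angle q j)) * N"
    unfolding N_def using j by (subst prod.remove[of _ j]) (auto simp: atLeast0LessThan)
  then have N: "N * (cos x - cos (cheb_angle q j)) = cos (real q * x) / 2 ^ (q - 1)"
    using prod_cos_minus_cheb_nodes[OF q] by (simp add: algebra_simps)
  have M: "M * sin (cheb_angle q j) * 2 ^ (q - 1) = real q * sin (real q * cheb_angle q j)"
    unfolding M_def by (rule prod_cheb_node_differences[OF q j])
  have s: "\<bar>sin (real q * cheb_angle q j)\<bar> = 1" using cheb_angle_times_q q by (simp add: sin_add)
  have sj: "sin (cheb_angle q j) > 0" using cheb_angle_bounds[OF j] by (intro sin_gt_zero) auto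
  have d: "cos x - cos (cheb_angle q j) \<noteq> 0" using nn j by auto
  have hN: "\<bar>N\<bar> = \<bar>cos (real q * x)\<bar> / (2 ^ (q - 1) * \<bar>cos x - cos (cheb_angle q j)\<bar>)"
  proof -
    have "\<bar>N\<bar> * \<bar>cos x - cos (cheb_angle q j)\<bar> = \<bar>cos (real q * x)\<bar> / 2 ^ (q - 1)"
      using arg_cong[OF N, of abs] by (simp add: abs_mult abs_divide)
    then show ?thesis using d by (simp add: field_simps)
  qed
  have hM: "\<bar>M\<bar> = real q / (sin (cheb_angle q j) * 2 ^ (q - 1))"
  proof -
    have "\<bar>M\<bar> * sin (cheb_angle q j) * 2 ^ (q - 1) = real q"
      using arg_cong[OF M, of abs] s sj by (simp add: abs_mult)
    then show ?thesis using sj by (simp add: field_simps)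
  qed
  have "(\<Prod>i\<in>{0..<q}-{j}. (cos x - cos (cheb_angle q i)) / (cos (cheb_angle q j) - cos (cheb_angle q i)))
      = N / M"
    unfolding N_def M_def by (rule prod_dividef)
  then have "\<bar>\<Prod>i\<in>{0..<q}-{j}. (cos x - cos (cheb_angle q i)) / (cos (cheb_angle q j) - cos (cheb_angle q i))\<bar>
      = (\<bar>cos (real q * x)\<bar> / (2 ^ (q - 1) * \<bar>cos x - cos (cheb_angle q j)\<bar>))
        / (real q / (sin (cheb_angle q j) * 2 ^ (q - 1)))"
    using hN hM by (simp add: abs_divide)
  also have "\<dots> = \<bar>cos (real q * x)\<bar> * sin (cheb_angle q j) / (real q * \<bar>cos x - cos (cheb_angle q j)\<bar>)"
    using sj d q by (simp add: field_simps)
  finally show ?thesis .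
qed

section \<open>The Lebesgue function as a cotangent sum\<close>

lemma sin_div_abs_cos_diff_le_cot:
  assumes tj: "0 < tj" "tj < pi" and x: "0 \<le> x" "x \<le> pi" "x \<noteq> tj"
  shows "sin tj / \<bar>cos x - cos tj\<bar> \<le> (\<bar>cot ((tj - x) / 2)\<bar> + \<bar>cot ((tj + x) / 2)\<bar>) / 2"
proof -
  define A where "A = (tj + x) / 2"
  define B where "B = (tj - x) / 2"
  have sA: "sin A > 0" unfolding A_def using tj x by (intro sin_gt_zero) auto
  have sB: "sin B \<noteq> 0"
  proof
    assume "sin B = 0"
    moreover have "- pi < B" "B < pi" unfolding B_def using tj x by auto
    ultimately have "B = 0" using sin_eq_0_pi by blast
    then show False unfolding B_def using x by auto
  qed
  have c: "cos x - cos tj = 2 * sin A * sin B"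
    unfolding A_def B_def by (simp add: cos_diff_cos add.commute)
  have "tj = A + B" unfolding A_def B_def by (simp add: field_simps)
  then have "sin tj = sin A * cos B + cos A * sin B" by (simp add: sin_add)
  then have E: "sin tj / (cos x - cos tj) = (cot B + cot A) / 2"
    unfolding c cot_def using sA sB by (simp add: field_simps)
  have "sin tj \<ge> 0" using tj by (simp add: sin_ge_zero)
  then have "sin tj / \<bar>cos x - cos tj\<bar> = \<bar>sin tj / (cos x - cos tj)\<bar>" by (simp add: abs_divide)
  also have "\<dots> = \<bar>cot B + cot A\<bar> / 2" unfolding E by simp
  also have "\<dots> \<le> (\<bar>cot B\<bar> + \<bar>cot A\<bar>) / 2" by (simp add: abs_triangle_ineq divide_right_mono)
  finally show ?thesis unfolding A_def B_def .
qed

lemma sum_abs_cot_cheb_reflect: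
  assumes q: "q \<ge> 1"
  shows "(\<Sum>j<q. \<bar>cot ((cheb_angle q j + x) / 2)\<bar>) = (\<Sum>i\<in>{q..<2*q}. \<bar>cot ((cheb_angle q i - x) / 2)\<bar>)"
proof (rule sum.reindex_bij_witness[of _ "\<lambda>i. 2 * q - 1 - i" "\<lambda>j. 2 * q - 1 - j"])
  fix j assume j: "j \<in> {..<q}"
  then have "cheb_angle q (2 * q - 1 - j) = 2 * pi - cheb_angle q j"
    unfolding cheb_angle_def using q by (simp add: of_nat_diff field_simps)
  then have e: "(cheb_angle q (2 * q - 1 - j) - x) / 2 = pi - (cheb_angle q j + x) / 2"
    by (simp add: field_simps)
  have r: "\<bar>cot (pi - y)\<bar> = \<bar>cot y\<bar>" for y :: real by (simp add: cot_def)
  show "\<bar>cot ((cheb_angle q (2 * q - 1 - j) - x) / 2)\<bar> = \<bar>cot ((cheb_angle q j + x) / 2)\<bar>"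
    unfolding e by (rule r)
qed auto

lemma sum_lessThan_double_split:
  "(\<Sum>i<2*q. g i) = (\<Sum>i<q. g i) + (\<Sum>i\<in>{q..<2*q::nat}. g i)"
  by (simp add: atLeast0LessThan[symmetric] sum.atLeastLessThan_concat)

lemma cheb_lebesgue_function_le_cot_sum:
  assumes q: "q \<ge> 1" and x: "0 \<le> x" "x \<le> pi"
    and nn: "\<And>i. i < q \<Longrightarrow> cos x \<noteq> cos (cheb_angle q i)"
  shows "(\<Sum>j<q. \<bar>\<Prod>i\<in>{0..<q}-{j}. (cos x - cos (cheb_angle q i)) / (cos (cheb_angle q j) - cos (cheb_angle q i))\<bar>)
          \<le> \<bar>cos (real q * x)\<bar> / (2 * real q) * (\<Sum>i<2*q. \<bar>cot ((cheb_angle q i - x) / 2)\<bar>)"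
proof -
  define K where "K = \<bar>cos (real q * x)\<bar> / (2 * real q)"
  have "(\<Sum>j<q. \<bar>\<Prod>i\<in>{0..<q}-{j}. (cos x - cos (cheb_angle q i)) / (cos (cheb_angle q j) - cos (cheb_angle q i))\<bar>)
     = (\<Sum>j<q. 2 * K * (sin (cheb_angle q j) / \<bar>cos x - cos (cheb_angle q j)\<bar>))"
    using abs_cheb_lagrange_cos[OF q _ nn] unfolding K_def by (intro sum.cong) (auto simp: field_simps)
  also have "\<dots> \<le> (\<Sum>j<q. K * (\<bar>cot ((cheb_angle q j - x) / 2)\<bar> + \<bar>cot ((cheb_angle q j + x) / 2)\<bar>))"
  proof (intro sum_mono)
    fix j assume j: "j \<in> {..<q}"
    then have "sin (cheb_angle q j) / \<bar>cos x - cos (cheb_angle q j)\<bar>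
        \<le> (\<bar>cot ((cheb_angle q j - x) / 2)\<bar> + \<bar>cot ((cheb_angle q j + x) / 2)\<bar>) / 2"
      using cheb_angle_bounds[of j q] nn[of j] x by (intro sin_div_abs_cos_diff_le_cot) auto
    moreover have "K \<ge> 0" unfolding K_def by simp
    ultimately have "2 * K * (sin (cheb_angle q j) / \<bar>cos x - cos (cheb_angle q j)\<bar>)
        \<le> 2 * K * ((\<bar>cot ((cheb_angle q j - x) / 2)\<bar> + \<bar>cot ((cheb_angle q j + x) / 2)\<bar>) / 2)"
      by (intro mult_left_mono) auto
    then show "2 * K * (sin (cheb_angle q j) / \<bar>cos x - cos (cheb_angle q j)\<bar>)
        \<le> K * (\<bar>cot ((cheb_angle q j - x) / 2)\<bar> + \<bar>cot ((cheb_angle q j + x) / 2)\<bar>)"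
      by simp
  qed
  also have "\<dots> = K * ((\<Sum>i<q. \<bar>cot ((cheb_angle q i - x) / 2)\<bar>)
      + (\<Sum>j<q. \<bar>cot ((cheb_angle q j + x) / 2)\<bar>))"
    by (simp add: sum.distrib sum_distrib_left distrib_left)
  also have "\<dots> = K * (\<Sum>i<2*q. \<bar>cot ((cheb_angle q i - x) / 2)\<bar>)"
    unfolding sum_lessThan_double_split[where q=q] sum_abs_cot_cheb_reflect[OF q] ..
  finally show ?thesis unfolding K_def .
qed

lemma sum_periodic_shift:
  fixes F :: "int \<Rightarrow> real"
  assumes per: "\<And>k. F (k + int n) = F k"
  shows "(\<Sum>i<n. F (a + int i)) = (\<Sum>i<n. F (b + int i))"
proof -
  have shift1: "(\<Sum>i<n. F (c + 1 + int i)) = (\<Sum>i<n. F (c + int i))" for c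
  proof -
    have "(\<Sum>i<Suc n. F (c + int i)) = F c + (\<Sum>i<n. F (c + 1 + int i))"
      by (subst sum.lessThan_Suc_shift) (simp add: add.assoc)
    moreover have "(\<Sum>i<Suc n. F (c + int i)) = (\<Sum>i<n. F (c + int i)) + F c"
      using per[of c] by simp
    ultimately show ?thesis by simp
  qed
  have shift: "(\<Sum>i<n. F (c + int k + int i)) = (\<Sum>i<n. F (c + int i))" for c k
  proof (induction k)
    case (Suc k)
    have "(\<Sum>i<n. F (c + int (Suc k) + int i)) = (\<Sum>i<n. F ((c + int k) + 1 + int i))"
      by (simp add: add_ac)
    then show ?case using Suc shift1 by simp
  qed simp
  define c where "c = min a b"
  have "a = c + int (nat (a - c))" "b = c + int (nat (b - c))" unfolding c_def by auto
  then show ?thesis using shift[of c "nat (a - c)"] shift[of c "nat (b - c)"] by metis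
qed

lemma cot_nonneg: "0 < y \<Longrightarrow> y \<le> pi/2 \<Longrightarrow> cot y \<ge> 0"
  unfolding cot_def by (intro divide_nonneg_nonneg cos_ge_zero sin_ge_zero) auto

text \<open>Folding a full period of \<open>\<bar>cot (h (k - u))\<bar>\<close> at the origin pairs the terms symmetric
  about each of the points \<open>h (j + 1/2)\<close>.\<close>
lemma sum_abs_cot_period_eq_pairs:
  fixes h u :: real and m :: int
  assumes qh: "real q * h = pi / 2" and h: "0 < h" and u: "0 < u" "u < 1"
  shows "(\<Sum>i<2*q. \<bar>cot (h * (of_int (int i - m) - u))\<bar>)
           = (\<Sum>j<q. cot (h * (real j + u)) + cot (h * (real j + 1 - u)))"
proof -
  define F where "F k = \<bar>cot (h * (of_int k - u))\<bar>" for k :: int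
  have per: "F (k + int (2*q)) = F k" for k
  proof -
    have "h * (of_int (k + int (2*q)) - u) = h * (of_int k - u) + pi" using qh by (simp add: algebra_simps)
    then show ?thesis unfolding F_def by (simp add: cot_def)
  qed
  have pos: "0 < h * (real j + v)" "h * (real j + v) \<le> pi/2" if "j < q" "0 < v" "v < 1" for j v
  proof -
    have "h * (real j + v) \<le> h * real q" using that h by (intro mult_left_mono) auto
    then show "h * (real j + v) \<le> pi/2" using qh by (simp add: mult.commute)
  qed (use that h in simp)
  have pairs: "F (- int j) + F (int j + 1) = cot (h * (real j + u)) + cot (h * (real j + 1 - u))"
    if j: "j < q" for j
  proof -
    have "h * (of_int (- int j) - u) = - (h * (real j + u))" by (simp add: algebra_simps)
    then have F1: "F (- int j) = \<bar>cot (h * (real j + u))\<bar>" unfolding F_def by simp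
    have F2: "F (int j + 1) = \<bar>cot (h * (real j + 1 - u))\<bar>" unfolding F_def by simp
    have "cot (h * (real j + u)) \<ge> 0" using cot_nonneg[OF pos[OF j u]] .
    moreover have "cot (h * (real j + 1 - u)) \<ge> 0"
      using cot_nonneg[OF pos[OF j, of "1 - u"]] u by (simp add: add_diff_eq)
    ultimately show ?thesis unfolding F1 F2 by simp
  qed
  have "(\<Sum>i<2*q. F (- m + int i)) = (\<Sum>i<2*q. F ((1 - int q) + int i))"
    by (rule sum_periodic_shift[where F=F and n="2*q"], rule per)
  also have "\<dots> = (\<Sum>i<q. F ((1 - int q) + int i)) + (\<Sum>i\<in>{q..<2*q}. F ((1 - int q) + int i))"
    by (rule sum_lessThan_double_split)
  also have "(\<Sum>i<q. F ((1 - int q) + int i)) = (\<Sum>j<q. F (- int j))"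
    by (rule sum.reindex_bij_witness[of _ "\<lambda>j. q - 1 - j" "\<lambda>i. q - 1 - i"])
       (auto simp: of_nat_diff algebra_simps)
  also have "(\<Sum>i\<in>{q..<2*q}. F ((1 - int q) + int i)) = (\<Sum>j<q. F (int j + 1))"
    by (rule sum.reindex_bij_witness[of _ "\<lambda>j. j + q" "\<lambda>i. i - q"])
       (auto simp: of_nat_diff algebra_simps)
  finally show ?thesis using pairs unfolding F_def by (simp add: sum.distrib[symmetric] add_ac)
qed

section \<open>Elementary trigonometric estimates\<close>

lemma sin_add_mult_sin_diff: "sin (c + e) * sin (c - e) = sin c ^ 2 - sin e ^ 2" for c e :: real
proof -
  have "sin (c + e) * sin (c - e) = sin c ^ 2 * cos e ^ 2 - cos c ^ 2 * sin e ^ 2"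
    by (simp add: sin_add sin_diff algebra_simps power2_eq_square)
  also have "\<dots> = sin c ^ 2 - sin e ^ 2" unfolding cos_squared_eq by (simp add: algebra_simps)
  finally show ?thesis .
qed

lemma cot_add_plus_cot_diff:
  fixes c e :: real
  assumes "sin (c + e) \<noteq> 0" "sin (c - e) \<noteq> 0"
  shows "cot (c + e) + cot (c - e) = sin (2 * c) / (sin c ^ 2 - sin e ^ 2)"
proof -
  have "sin ((c + e) + (c - e)) = sin (c + e) * cos (c - e) + cos (c + e) * sin (c - e)"
    by (rule sin_add)
  then show ?thesis
    unfolding cot_def sin_add_mult_sin_diff[symmetric] using assms by (simp add: field_simps)
qed

lemma two_cot_eq: "sin c \<noteq> 0 \<Longrightarrow> 2 * cot c = sin (2 * c) / sin c ^ 2" for c :: real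
  unfolding cot_def sin_double by (simp add: field_simps power2_eq_square)

lemma sin_mult_cos_le:
  fixes a t :: real
  assumes a: "0 \<le> a" "a \<le> 1" and t: "0 \<le> t" "t \<le> pi"
  shows "sin (a * t) * cos t \<le> a * cos (a * t) * sin t"
proof -
  define N where "N s = a * cos (a * s) * sin s - sin (a * s) * cos s" for s
  have "N 0 \<le> N t"
  proof (rule DERIV_nonneg_imp_nondecreasing[OF t(1)])
    fix s assume s: "0 \<le> s" "s \<le> t"
    have der: "(N has_real_derivative (1 - a^2) * sin (a * s) * sin s) (at s)"
      unfolding N_def by (auto intro!: derivative_eq_intros simp: power2_eq_square algebra_simps)
    have "a * s \<le> 1 * pi" using a s t by (intro mult_mono) auto
    then have "sin (a * s) \<ge> 0" using a s by (intro sin_ge_zero) auto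
    moreover have "sin s \<ge> 0" using s t by (intro sin_ge_zero) auto
    moreover have "1 - a^2 \<ge> 0" using a by (simp add: power_le_one)
    ultimately show "\<exists>y. (N has_real_derivative y) (at s) \<and> 0 \<le> y" using der by auto
  qed
  then show ?thesis unfolding N_def by simp
qed

lemma sin_mult_times_sin_mono:
  fixes a x y :: real
  assumes a: "0 \<le> a" "a \<le> 1" and xy: "0 < x" "x \<le> y" "y < pi"
  shows "sin (a * x) * sin y \<le> sin (a * y) * sin x"
proof -
  define R where "R s = sin (a * s) / sin s" for s
  have sp: "sin s > 0" if "x \<le> s" "s \<le> y" for s using that xy by (intro sin_gt_zero) auto
  have "R x \<le> R y"
  proof (rule DERIV_nonneg_imp_nondecreasing[OF xy(2)])
    fix s assume s: "x \<le> s" "s \<le> y"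
    have der: "(R has_real_derivative (a * cos (a * s) * sin s - sin (a * s) * cos s) / (sin s)^2) (at s)"
      unfolding R_def using sp[OF s] by (auto intro!: derivative_eq_intros simp: power2_eq_square field_simps)
    have "sin (a * s) * cos s \<le> a * cos (a * s) * sin s" using sin_mult_cos_le[OF a, of s] s xy by auto
    then have "0 \<le> (a * cos (a * s) * sin s - sin (a * s) * cos s) / (sin s)^2"
      by (intro divide_nonneg_nonneg) auto
    then show "\<exists>d. (R has_real_derivative d) (at s) \<and> 0 \<le> d" using der by blast
  qed
  then show ?thesis unfolding R_def using sp[of x] sp[of y] xy by (simp add: divide_simps mult.commute)
qed

lemma sin_mult_le_sqrt2_sin:
  fixes a x :: real
  assumes a: "0 \<le> a" "a \<le> 1" and x: "0 < x" "x \<le> pi/8"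
  shows "sin (a * x) \<le> sqrt 2 * sin (pi * a / 4) * sin x"
proof -
  define y where "y = a * (pi/8)"
  have y: "0 \<le> y" "y \<le> pi/8" unfolding y_def using a by (auto intro: mult_left_le_one_le)
  have s8: "sin (pi/8) > 0" by (intro sin_gt_zero) auto
  have "2 * sqrt 2 * cos (pi/8) * sin (pi/8) = sqrt 2 * sin (2 * (pi/8))"
    unfolding sin_double by (simp add: algebra_simps)
  also have "\<dots> = 1" by (simp add: sin_45)
  finally have one: "2 * sqrt 2 * cos (pi/8) * sin (pi/8) = 1" .
  have "sin y = sin y * (2 * sqrt 2 * cos (pi/8) * sin (pi/8))" using one by simp
  also have "\<dots> \<le> sin y * (2 * sqrt 2 * cos y * sin (pi/8))"
    using y s8 by (intro mult_left_mono mult_right_mono cos_monotone_0_pi_le sin_ge_zero) auto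
  also have "\<dots> = sqrt 2 * sin (2 * y) * sin (pi/8)" unfolding sin_double by (simp add: algebra_simps)
  finally have ey: "sin y \<le> sqrt 2 * sin (pi * a / 4) * sin (pi / 8)"
    unfolding y_def by (simp add: mult.commute)
  have "sin (a * x) * sin (pi/8) \<le> sin y * sin x"
    using sin_mult_times_sin_mono[OF a x(1) x(2)] unfolding y_def by simp
  also have "\<dots> \<le> sqrt 2 * sin (pi * a / 4) * sin (pi / 8) * sin x"
    using ey x by (intro mult_right_mono) (auto intro: sin_ge_zero)
  finally show ?thesis using s8 by (simp add: algebra_simps)
qed

lemma sin_pi_mult_sin_sq_le:
  fixes h u c :: real
  assumes h: "0 < h" "h \<le> pi/4" and u: "0 < u" "u < 1" and c: "h / 2 \<le> c" "c \<le> pi / 2 - h / 2"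
  shows "sin (pi * u) * sin c ^ 2 \<le> sin c ^ 2 - sin (h * (u - 1/2)) ^ 2"
proof -
  define aw where "aw = \<bar>u - 1/2\<bar>"
  have aw: "0 \<le> aw" "aw \<le> 1/2" unfolding aw_def using u by (auto simp: abs_if)
  have se: "sin (h * (u - 1/2)) ^ 2 = sin (h * aw) ^ 2"
  proof -
    define e where "e = h * (u - 1/2)"
    have "h * aw = \<bar>e\<bar>" unfolding e_def aw_def using h by (simp add: abs_mult)
    then show ?thesis unfolding e_def[symmetric] by (cases "e \<ge> 0") simp_all
  qed
  have "sin (h * aw) \<ge> 0" using h aw mult_mono[of h "pi/4" aw 1] by (intro sin_ge_zero) auto
  moreover have "sin ((2 * aw) * (h / 2)) \<le> sqrt 2 * sin (pi * (2 * aw) / 4) * sin (h / 2)"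
    using aw h by (intro sin_mult_le_sqrt2_sin) auto
  ultimately have "sin (h * (u - 1/2)) ^ 2 \<le> (sqrt 2 * sin (pi * aw / 2) * sin (h / 2)) ^ 2"
    unfolding se by (intro power_mono) (auto simp: mult.commute)
  also have "\<dots> = 2 * sin (pi * aw / 2) ^ 2 * sin (h / 2) ^ 2" by (simp add: power_mult_distrib)
  also have "\<dots> \<le> 2 * sin (pi * aw / 2) ^ 2 * sin c ^ 2"
    using c h by (intro mult_left_mono power_mono sin_ge_zero sin_monotone_2pi_le) auto
  also have "2 * sin (pi * aw / 2) ^ 2 = 1 - sin (pi * u)"
  proof -
    have "2 * (pi * aw / 2) = \<bar>pi * (u - 1/2)\<bar>" unfolding aw_def by (simp add: abs_mult)
    then have "cos (2 * (pi * aw / 2)) = cos (pi * (u - 1/2))"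
      by (cases "pi * (u - 1/2) \<ge> 0") simp_all
    then have "cos (2 * (pi * aw / 2)) = sin (pi * u)" by (simp add: cos_diff algebra_simps)
    then show ?thesis using cos_double_sin[of "pi * aw / 2"] by simp
  qed
  finally show ?thesis by (simp add: algebra_simps)
qed

text \<open>The pair inequality behind the Lebesgue constant: \<open>sin (\<pi> u)\<close> compensates the blow-up of
  the two cotangents as \<open>u \<rightarrow> 0\<close>, uniformly in the position k of the pair.\<close>
lemma sin_pi_mult_cot_pair_le:
  fixes h u :: real and k :: nat
  assumes h: "0 < h" "h \<le> pi/4" and u: "0 < u" "u < 1" and k: "(real k + 1) * h \<le> pi/2"
  shows "sin (pi * u) * (cot (h * (real k + u)) + cot (h * (real k + 1 - u)))
           \<le> 2 * cot (h * (real k + 1/2))"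
proof -
  define c where "c = h * (real k + 1/2)"
  define e where "e = h * (u - 1/2)"
  have A: "h * (real k + u) = c + e" and B: "h * (real k + 1 - u) = c - e"
    unfolding c_def e_def by (simp_all add: algebra_simps)
  have hu: "0 < h * u" "h * u < h" using h u by (simp_all add: mult_strict_left_mono[of u 1 h, simplified])
  have hk: "h * real k \<ge> 0" "h * real k + h \<le> pi / 2" using h k by (simp_all add: algebra_simps)
  have ce: "c + e = h * real k + h * u" "c - e = h * real k + h - h * u"
    unfolding c_def e_def by (simp_all add: algebra_simps)
  have sA: "sin (c + e) > 0" unfolding ce(1) using hu hk pi_gt_zero by (intro sin_gt_zero) linarith+
  have sB: "sin (c - e) > 0" unfolding ce(2) using hu hk pi_gt_zero by (intro sin_gt_zero) linarith+
  have c1: "h / 2 \<le> c" "c \<le> pi / 2 - h / 2" unfolding c_def using h hk by (auto simp: algebra_simps)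
  have sc: "sin c > 0" using c1 h by (intro sin_gt_zero) auto
  have s2c: "sin (2 * c) \<ge> 0" using c1 h by (intro sin_ge_zero) auto
  have key: "sin (pi * u) * sin c ^ 2 \<le> sin c ^ 2 - sin e ^ 2"
    unfolding e_def by (rule sin_pi_mult_sin_sq_le[OF h u c1])
  have P0: "sin c ^ 2 - sin e ^ 2 > 0"
    unfolding sin_add_mult_sin_diff[symmetric] using sA sB by (rule mult_pos_pos)
  have "sin (pi * u) * (cot (c + e) + cot (c - e)) = sin (pi * u) * sin (2 * c) / (sin c ^ 2 - sin e ^ 2)"
    using cot_add_plus_cot_diff sA sB by simp
  also have "\<dots> \<le> sin (2 * c) / sin c ^ 2"
    using P0 sc mult_right_mono[OF key s2c] by (simp add: divide_simps mult_ac)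
  also have "\<dots> = 2 * cot c" using two_cot_eq sc by simp
  finally show ?thesis unfolding A B c_def .
qed

section \<open>The midpoint cotangent sum\<close>

lemma ln_pi_half_ge: "0.45 \<le> ln (pi / 2)"
proof -
  have sq: "a ^ 2 \<le> r'" if "0 \<le> a" "a \<le> r" "r * r \<le> r'" for a r r' :: real
    using that mult_mono[of a r a r] by (simp add: power2_eq_square)
  define t :: real where "t = 0.45 / 128"
  define a where "a = 1 + t + t\<^sup>2"
  have a0: "0 \<le> a" "a \<le> 1.0035281" unfolding a_def t_def by (simp_all add: power2_eq_square)
  have b1: "a ^ 2 \<le> 1.0070688" by (rule sq[OF a0]) simp
  have b2: "(a ^ 2) ^ 2 \<le> 1.0141877" by (rule sq[OF _ b1]) simp_all
  have b3: "((a ^ 2) ^ 2) ^ 2 \<le> 1.0285768" by (rule sq[OF _ b2]) simp_all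
  have b4: "(((a ^ 2) ^ 2) ^ 2) ^ 2 \<le> 1.0579704" by (rule sq[OF _ b3]) simp_all
  have b5: "((((a ^ 2) ^ 2) ^ 2) ^ 2) ^ 2 \<le> 1.1193015" by (rule sq[OF _ b4]) simp_all
  have b6: "(((((a ^ 2) ^ 2) ^ 2) ^ 2) ^ 2) ^ 2 \<le> 1.252836" by (rule sq[OF _ b5]) simp_all
  have "((((((a ^ 2) ^ 2) ^ 2) ^ 2) ^ 2) ^ 2) ^ 2 \<le> 1.5695982" by (rule sq[OF _ b6]) simp_all
  then have a128: "a ^ 128 \<le> 1.5695982" by (simp flip: power_mult)
  have "exp (0.45::real) = exp t ^ 128" unfolding t_def by (simp flip: exp_of_nat_mult)
  also have "\<dots> \<le> a ^ 128" unfolding a_def by (intro power_mono exp_bound) (auto simp: t_def)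
  also have "\<dots> \<le> pi / 2" using a128 pi_approx by simp
  finally show ?thesis by (subst ln_ge_iff) auto
qed

lemma sin_ge_taylor5: "x - x ^ 3 / 6 - x ^ 5 / 120 \<le> sin x" if "0 \<le> x" for x :: real
proof -
  have "\<bar>sin x - (\<Sum>m<5. sin_coeff m * x ^ m)\<bar> \<le> inverse (fact 5) * \<bar>x\<bar> ^ 5"
    by (rule Maclaurin_sin_bound)
  moreover have "(\<Sum>m<5. sin_coeff m * x ^ m) = x - x ^ 3 / 6"
  proof -
    have c: "sin_coeff 0 = 0" "sin_coeff 1 = 1" "sin_coeff (Suc 0) = 1" "sin_coeff 2 = 0"
        "sin_coeff 3 = -1/6" "sin_coeff 4 = 0"
      by (simp_all add: sin_coeff_def fact_numeral)
    have "{..<5::nat} = {0,1,2,3,4}" by auto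
    then show ?thesis by (simp add: c)
  qed
  ultimately have "\<bar>sin x - (x - x ^ 3 / 6)\<bar> \<le> x ^ 5 / 120" using that by (simp add: fact_numeral)
  then show ?thesis by linarith
qed

lemma cos_le_taylor6: "cos x \<le> 1 - x ^ 2 / 2 + x ^ 4 / 24 + x ^ 6 / 720" for x :: real
proof -
  obtain t where t: "cos x = (\<Sum>m<6. cos_coeff m * x ^ m) + (cos (t + 1/2 * real 6 * pi) / fact 6) * x ^ 6"
    using Maclaurin_cos_expansion by blast
  moreover have "(\<Sum>m<6. cos_coeff m * x ^ m) = 1 - x ^ 2 / 2 + x ^ 4 / 24"
  proof -
    have c: "cos_coeff 0 = 1" "cos_coeff 1 = 0" "cos_coeff (Suc 0) = 0" "cos_coeff 2 = -1/2"
        "cos_coeff 3 = 0" "cos_coeff 4 = 1/24" "cos_coeff 5 = 0"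
      by (simp_all add: cos_coeff_def fact_numeral)
    have "{..<6::nat} = {0,1,2,3,4,5}" by auto
    then show ?thesis by (simp add: c)
  qed
  moreover have "cos (t + 1/2 * real 6 * pi) * x ^ 6 \<le> 1 * x ^ 6"
    by (intro mult_right_mono) (simp_all add: zero_le_even_power)
  ultimately show ?thesis by (simp add: fact_numeral)
qed

lemma x_cot_le:
  fixes x :: real
  assumes x: "0 < x" "x \<le> 1/2"
  shows "x * cot x \<le> 1 - x^2 / 3"
proof -
  define D where "D = 1 - x^2/6 - x^4/120"
  define N where "N = 1 - x^2/2 + x^4/24 + x^6/720"
  have sx: "sin x > 0" using x pi_approx by (intro sin_gt_zero) auto
  have sD: "x * D \<le> sin x" using sin_ge_taylor5[of x] x unfolding D_def by (simp add: field_simps power_def)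
  have x2: "x^2 \<le> 1/4" using power_mono[of x "1/2" 2] x by (simp add: power2_eq_square)
  have "(1 - x^2/3) * D - N = x^4/180 + x^6/720"
    unfolding N_def D_def by (simp add: field_simps power_def)
  moreover have "x^4/180 + x^6/720 \<ge> 0" by (simp add: zero_le_even_power)
  ultimately have "N \<le> (1 - x^2/3) * D" by linarith
  then have "x * cos x \<le> x * ((1 - x^2/3) * D)"
    using cos_le_taylor6[of x] x unfolding N_def by (intro mult_left_mono) auto
  also have "\<dots> = (1 - x^2/3) * (x * D)" by simp
  also have "\<dots> \<le> (1 - x^2/3) * sin x" using sD x2 by (intro mult_left_mono) auto
  finally show ?thesis using sx unfolding cot_def by (simp add: pos_divide_le_eq)
qed

lemma sin_double_div_ge:
  fixes x :: real
  assumes x: "0 < x"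
  shows "1 - 2 * x^2 / 3 - 2 * x^4 / 15 \<le> sin (2 * x) / (2 * x)"
proof -
  have "2 * x - (2 * x) ^ 3 / 6 - (2 * x) ^ 5 / 120 \<le> sin (2 * x)" using sin_ge_taylor5[of "2*x"] x by simp
  moreover have "2 * x - (2 * x) ^ 3 / 6 - (2 * x) ^ 5 / 120 = (2 * x) * (1 - 2 * x^2 / 3 - 2 * x^4 / 15)"
    by (simp add: field_simps power_def)
  ultimately show ?thesis using x by (simp add: pos_le_divide_eq mult.commute)
qed

text \<open>The numerical heart of the constant \<open>1 + 2/\<pi> ln q\<close>: the first cotangent term and the
  boundary term of the logarithmic comparison together stay below \<open>\<pi>/2 + ln (\<pi>/2)\<close>.\<close>
lemma cot_minus_ln_sinc_le:
  fixes x :: real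
  assumes x: "0 < x" "x \<le> pi / 8"
  shows "2 * x * cot x - ln (sin (2 * x) / (2 * x)) \<le> pi / 2 + ln (pi / 2)"
proof -
  have xb: "x \<le> 0.3927" using x pi_approx by simp
  have x2: "x^2 \<le> 0.15422" using power_mono[of x "0.3927" 2] x xb by (simp add: power2_eq_square)
  have x4: "x^4 \<le> 0.023785"
  proof -
    have "(x^2)^2 \<le> 0.15422^2" using x2 by (intro power_mono) auto
    moreover have "x^4 = (x^2)^2" by (simp flip: power_mult)
    ultimately show ?thesis by (simp add: power2_eq_square)
  qed
  define T where "T = 2 * x^2 / 3 + 2 * x^4 / 15"
  have T0: "0 \<le> T" unfolding T_def by (simp add: zero_le_even_power)
  have T1: "T \<le> 0.106" unfolding T_def using x2 x4 by simp
  define S where "S = sin (2 * x) / (2 * x)"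
  have S1: "1 - T \<le> S" unfolding S_def T_def using sin_double_div_ge[OF x(1)] by simp
  have S0: "S > 0" using S1 T1 by simp
  have "- ln S = ln (1 / S)" using S0 by (simp add: ln_div)
  also have "\<dots> \<le> 1 / S - 1" using S0 by (intro ln_le_minus_one) simp
  also have "\<dots> \<le> 1 / (1 - T) - 1" using S1 T1 by (simp add: frac_le)
  also have "\<dots> \<le> T + 0.013"
  proof -
    have "T * T \<le> 0.106 * 0.106" using T0 T1 by (intro mult_mono) auto
    then have tt: "T * T \<le> 0.011236" by simp
    have "(T + 1.013) * (1 - T) = 1.013 - 0.013 * T - T * T" by (simp add: field_simps)
    then have "1 \<le> (T + 1.013) * (1 - T)" using tt T0 T1 by simp
    then show ?thesis using T1 by (simp add: field_simps)
  qed
  finally have "- ln S \<le> T + 0.013" .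
  moreover have "2 * x * cot x \<le> 2 - 2 * x^2 / 3" using x_cot_le[OF x(1)] xb by simp
  ultimately have "2 * x * cot x - ln S \<le> 2 + 2 * x^4 / 15 + 0.013" unfolding T_def by linarith
  also have "\<dots> \<le> pi / 2 + ln (pi / 2)" using x4 ln_pi_half_ge pi_approx by simp
  finally show ?thesis unfolding S_def .
qed

text \<open>Convexity of \<open>cot\<close> on \<open>(0, \<pi>/2]\<close> in integrated form: the midpoint value bounds the mean of
  \<open>cot\<close> over \<open>[c - d, c + d]\<close>, whose integral is the difference of \<open>ln sin\<close>.\<close>
lemma cot_le_ln_sin_diff:
  fixes c d :: real
  assumes d: "0 < d" "d < c" and c: "c \<le> pi / 2"
  shows "2 * d * cot c \<le> ln (sin (c + d)) - ln (sin (c - d))"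
proof -
  define \<phi> where "\<phi> e = ln (sin (c + e)) - ln (sin (c - e)) - 2 * e * cot c" for e
  have sc: "sin c > 0" using d c by (intro sin_gt_zero) auto
  have s2c: "sin (2 * c) \<ge> 0" using d c by (intro sin_ge_zero) auto
  have "\<phi> 0 \<le> \<phi> d"
  proof (rule DERIV_nonneg_imp_nondecreasing[OF less_imp_le[OF d(1)]])
    fix e assume e: "0 \<le> e" "e \<le> d"
    have s: "sin (c + e) > 0" "sin (c - e) > 0" using e d c by (auto intro!: sin_gt_zero)
    have der: "(\<phi> has_real_derivative (cot (c + e) + cot (c - e) - 2 * cot c)) (at e)"
      unfolding \<phi>_def using s sc by (auto intro!: derivative_eq_intros simp: cot_def field_simps)
    have "0 < sin c ^ 2 - sin e ^ 2"
      unfolding sin_add_mult_sin_diff[symmetric] using s by (rule mult_pos_pos)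
    then have "sin (2 * c) / sin c ^ 2 \<le> sin (2 * c) / (sin c ^ 2 - sin e ^ 2)"
      using sc s2c by (intro divide_left_mono) auto
    then have "cot (c + e) + cot (c - e) - 2 * cot c \<ge> 0"
      using cot_add_plus_cot_diff[of c e] two_cot_eq[of c] s sc by simp
    then show "\<exists>y. (\<phi> has_real_derivative y) (at e) \<and> 0 \<le> y" using der by blast
  qed
  then show ?thesis unfolding \<phi>_def by simp
qed

lemma sum_cot_midpoints_le:
  assumes q: "q \<ge> 2"
  shows "(\<Sum>k<q. cot ((2*real k+1)*pi/(4*real q)))
           \<le> cot (pi/(4*real q)) - ln (sin (pi/(2*real q))) / (pi/(2*real q))"
proof -
  define h where "h = pi/(2*real q)"
  have h0: "h > 0" unfolding h_def using q by simp
  define g where "g i = ln (sin ((real i + 1) * h))" for i :: nat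
  define f where "f k = cot ((2*real k+1)*pi/(4*real q))" for k :: nat
  have step: "h * f (Suc i) \<le> g (Suc i) - g i" if i: "i < q - 1" for i
  proof -
    define c where "c = (real i + 3/2) * h"
    have fc: "f (Suc i) = cot c" unfolding f_def c_def h_def using q by (simp add: field_simps)
    have "0 \<le> real i * h" using h0 by simp
    then have d1: "0 < h/2" "h/2 < c" unfolding c_def distrib_right using h0 by linarith+
    have "real i + 3/2 \<le> real q - 1/2" using i by linarith
    then have "c \<le> (real q - 1/2) * h" unfolding c_def using h0 by (intro mult_right_mono) auto
    also have "\<dots> \<le> pi / 2" unfolding h_def using q by (simp add: field_simps)
    finally have "2 * (h/2) * cot c \<le> ln (sin (c + h/2)) - ln (sin (c - h/2))"
      by (rule cot_le_ln_sin_diff[OF d1])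
    moreover have "c + h/2 = (real (Suc i) + 1) * h" "c - h/2 = (real i + 1) * h"
      unfolding c_def by (simp_all add: field_simps)
    ultimately show ?thesis unfolding fc g_def by simp
  qed
  have "(\<Sum>i<q-1. h * f (Suc i)) \<le> (\<Sum>i<q-1. g (Suc i) - g i)" by (intro sum_mono step) auto
  also have "\<dots> = g (q - 1) - g 0" by (rule sum_lessThan_telescope)
  also have "g (q - 1) = 0"
  proof -
    have e: "(real (q - 1) + 1) * h = pi / 2" unfolding h_def using q by (simp add: of_nat_diff field_simps)
    show ?thesis unfolding g_def e by simp
  qed
  finally have "h * (\<Sum>i<q-1. f (Suc i)) \<le> - ln (sin h)" by (simp add: sum_distrib_left g_def)
  then have "(\<Sum>i<q-1. f (Suc i)) \<le> - ln (sin h) / h"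
    using h0 by (subst pos_le_divide_eq) (auto simp: mult.commute)
  moreover have "(\<Sum>k<q. f k) = f 0 + (\<Sum>i<q-1. f (Suc i))"
    using q sum.lessThan_Suc_shift[of f "q - 1"] by simp
  ultimately show ?thesis unfolding f_def h_def by simp
qed

lemma mean_cot_midpoints_le:
  assumes q: "q \<ge> 2"
  shows "(\<Sum>k<q. cot ((2*real k+1)*pi/(4*real q))) / real q \<le> 1 + 2 / pi * ln (real q)"
proof -
  define x where "x = pi / (4 * real q)"
  have x0: "0 < x" and x8: "x \<le> pi / 8" unfolding x_def using q by (simp_all add: field_simps)
  have qx: "real q = (pi / 2) / (2 * x)" unfolding x_def using q by simp
  have s2: "sin (2 * x) > 0" using x0 x8 by (intro sin_gt_zero) auto
  have lnq: "ln (real q) = ln (pi / 2) - ln (2 * x)"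
    unfolding qx using x0 by (intro ln_divide_pos) auto
  have "(\<Sum>k<q. cot ((2*real k+1)*pi/(4*real q))) / real q
      \<le> (cot x - ln (sin (2 * x)) / (2 * x)) / real q"
    using sum_cot_midpoints_le[OF q] q unfolding x_def by (simp add: divide_right_mono mult.commute)
  also have "\<dots> = 2 / pi * (2 * x * cot x - ln (sin (2 * x)))"
    unfolding qx using x0 by (simp add: field_simps)
  also have "\<dots> \<le> 2 / pi * (pi / 2 + ln (pi / 2) - ln (2 * x))"
    using cot_minus_ln_sinc_le[OF x0 x8] s2 x0 by (intro mult_left_mono) (auto simp: ln_div)
  also have "\<dots> = 1 + 2 / pi * ln (real q)" unfolding lnq by (simp add: field_simps)
  finally show ?thesis .
qed

section \<open>The Lebesgue constant of the Chebyshev nodes\<close>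

lemma cheb_angle_offset:
  assumes q: "q \<ge> 1" and x: "0 \<le> x" "x \<le> pi" and nn: "\<And>j. j < q \<Longrightarrow> x \<noteq> cheb_angle q j"
  obtains m :: int and u :: real where "0 < u" "u < 1" "\<bar>cos (real q * x)\<bar> = sin (pi * u)"
    and "\<And>i. (cheb_angle q i - x) / 2 = pi / (2 * real q) * (of_int (int i - m) - u)"
proof -
  define h where "h = pi / (2 * real q)"
  have qh: "real q * h = pi/2" unfolding h_def using q by simp
  \<comment> \<open>write \<open>x = h (2 (m + u) + 1)\<close> with \<open>m\<close> an integer and \<open>0 \<le> u < 1\<close>\<close>
  define z where "z = real q * x / pi - 1/2"
  define m where "m = \<lfloor>z\<rfloor>"
  define u where "u = z - of_int m"
  have xz: "x = h * (2 * z + 1)" unfolding h_def z_def using q by (simp add: field_simps)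
  have u: "0 < u" "u < 1"
  proof -
    have "u \<noteq> 0"
    proof
      assume "u = 0"
      then have zm: "z = of_int m" unfolding u_def by simp
      have "z \<ge> -1/2" unfolding z_def using x q by simp
      moreover have "z \<le> real q - 1/2"
        unfolding z_def using x q by (simp add: divide_le_eq mult_left_mono)
      ultimately have "0 \<le> m" "m < int q" using zm by linarith+
      moreover have "x = cheb_angle q (nat m)"
        unfolding cheb_angle_def using xz zm h_def \<open>0 \<le> m\<close> by (simp add: field_simps)
      ultimately show False using nn by (metis nat_less_iff)
    qed
    then show "0 < u" "u < 1" unfolding u_def m_def by linarith+
  qed
  have "real q * x = (real q * h) * (2 * z + 1)" unfolding xz by (simp add: algebra_simps)
  then have "real q * x = pi * u + pi * of_int m + pi / 2" unfolding qh u_def by (simp add: algebra_simps)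
  then have "\<bar>cos (real q * x)\<bar> = \<bar>sin (pi * u)\<bar>"
    by (simp add: cos_add sin_add abs_mult)
  also have "\<dots> = sin (pi * u)" using u by (intro abs_of_nonneg sin_ge_zero) auto
  finally have "\<bar>cos (real q * x)\<bar> = sin (pi * u)" .
  moreover have "(cheb_angle q i - x) / 2 = h * (of_int (int i - m) - u)" for i
    unfolding cheb_angle_def xz u_def h_def using q by (simp add: field_simps)
  ultimately show ?thesis using u that unfolding h_def by blast
qed

lemma abs_cos_mult_sum_abs_cot_le:
  assumes q: "q \<ge> 2" and x: "0 \<le> x" "x \<le> pi" and nn: "\<And>j. j < q \<Longrightarrow> x \<noteq> cheb_angle q j"
  shows "\<bar>cos (real q * x)\<bar> * (\<Sum>i<2*q. \<bar>cot ((cheb_angle q i - x) / 2)\<bar>)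
           \<le> 2 * (\<Sum>k<q. cot ((2*real k+1)*pi/(4*real q)))"
proof -
  define h where "h = pi / (2 * real q)"
  have h0: "h > 0" and h4: "h \<le> pi/4" and qh: "real q * h = pi/2"
    unfolding h_def using q by (simp_all add: field_simps)
  obtain m u where u: "0 < u" "u < 1" and cosq: "\<bar>cos (real q * x)\<bar> = sin (pi * u)"
    and angle: "\<And>i. (cheb_angle q i - x) / 2 = h * (of_int (int i - m) - u)"
    using cheb_angle_offset[OF _ x nn] q unfolding h_def by (metis one_le_numeral order.trans)
  have "\<bar>cos (real q * x)\<bar> * (\<Sum>i<2*q. \<bar>cot ((cheb_angle q i - x) / 2)\<bar>)
        = (\<Sum>j<q. sin (pi * u) * (cot (h * (real j + u)) + cot (h * (real j + 1 - u))))"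
    unfolding cosq angle sum_abs_cot_period_eq_pairs[OF qh h0 u] by (simp add: sum_distrib_left)
  also have "\<dots> \<le> (\<Sum>j<q. 2 * cot (h * (real j + 1/2)))"
  proof (intro sum_mono)
    fix j assume "j \<in> {..<q}"
    then have "(real j + 1) * h \<le> pi/2" using h0 by (simp add: mult_right_mono flip: qh)
    then show "sin (pi * u) * (cot (h * (real j + u)) + cot (h * (real j + 1 - u)))
        \<le> 2 * cot (h * (real j + 1/2))"
      using sin_pi_mult_cot_pair_le[OF h0 h4 u] by simp
  qed
  also have "\<dots> = 2 * (\<Sum>k<q. cot ((2*real k+1)*pi/(4*real q)))"
    unfolding sum_distrib_left h_def by (intro sum.cong) (auto simp: field_simps)
  finally show ?thesis .
qed

lemma cheb_lebesgue_constant_le: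
  assumes q: "q \<ge> 2" and t: "-1 \<le> t" "t \<le> 1"
  shows "(\<Sum>j<q. \<bar>\<Prod>i\<in>{0..<q}-{j}. (t - cos (cheb_angle q i)) / (cos (cheb_angle q j) - cos (cheb_angle q i))\<bar>)
          \<le> 1 + 2 / pi * ln (real q)"
proof (cases "\<exists>k<q. t = cos (cheb_angle q k)")
  case True
  then obtain k where k: "k < q" "t = cos (cheb_angle q k)" by auto
  have inj: "inj_on (\<lambda>i. cos (cheb_angle q i)) {..<q}" by (auto intro: inj_onI cos_cheb_angle_inj)
  have "(\<Sum>j<q. \<bar>\<Prod>i\<in>{0..<q}-{j}. (t - cos (cheb_angle q i)) / (cos (cheb_angle q j) - cos (cheb_angle q i))\<bar>)
      = (\<Sum>j<q. if j = k then 1 else 0)"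
    using lagrange_basis_at_node[OF inj _ k(1)] k by (intro sum.cong) auto
  also have "\<dots> = 1" using k by simp
  finally show ?thesis using q by simp
next
  case False
  define x where "x = arccos t"
  have x: "0 \<le> x" "x \<le> pi" "cos x = t" unfolding x_def using t by (auto intro: arccos_lbound arccos_ubound)
  have nn: "\<And>i. i < q \<Longrightarrow> cos x \<noteq> cos (cheb_angle q i)" using False x by auto
  then have nn': "\<And>j. j < q \<Longrightarrow> x \<noteq> cheb_angle q j" by auto
  have "(\<Sum>j<q. \<bar>\<Prod>i\<in>{0..<q}-{j}. (t - cos (cheb_angle q i)) / (cos (cheb_angle q j) - cos (cheb_angle q i))\<bar>)
      \<le> (\<bar>cos (real q * x)\<bar> * (\<Sum>i<2*q. \<bar>cot ((cheb_angle q i - x) / 2)\<bar>)) / (2 * real q)"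
    using cheb_lebesgue_function_le_cot_sum[OF _ x(1,2) nn] x(3) q by simp
  also have "\<dots> \<le> (2 * (\<Sum>k<q. cot ((2*real k+1)*pi/(4*real q)))) / (2 * real q)"
    using abs_cos_mult_sum_abs_cot_le[OF q x(1,2) nn'] q by (intro divide_right_mono) auto
  also have "\<dots> \<le> 1 + 2 / pi * ln (real q)" using mean_cot_midpoints_le[OF q] by simp
  finally show ?thesis .
qed

lemma cheb_node_in_interval: "a < b \<Longrightarrow> cheb_node q a b j \<in> {a..b}"
proof -
  assume "a < b"
  moreover have "-1 \<le> cos (cheb_angle q j)" "cos (cheb_angle q j) \<le> 1" by auto
  ultimately have "(b - a) / 2 * (-1) \<le> (b - a) / 2 * cos (cheb_angle q j)"
      "(b - a) / 2 * cos (cheb_angle q j) \<le> (b - a) / 2 * 1"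
    by (intro mult_left_mono; simp)+
  then show ?thesis unfolding cheb_node_eq by (auto simp: field_simps)
qed

lemma lagrange_cheb_affine:
  assumes ab: "a < b"
  shows "lagrange_cheb q a b j y = (\<Prod>i\<in>{0..<q}-{j}.
      ((y - (a+b)/2) / ((b-a)/2) - cos (cheb_angle q i)) / (cos (cheb_angle q j) - cos (cheb_angle q i)))"
  unfolding lagrange_cheb_def cheb_node_eq
proof (intro prod.cong refl)
  fix i
  have r: "(b - a) / 2 \<noteq> 0" using ab by simp
  have n: "y - ((a + b) / 2 + (b - a) / 2 * cos (cheb_angle q i))
      = (b - a) / 2 * ((y - (a+b)/2) / ((b - a) / 2) - cos (cheb_angle q i))"
    using r by (simp add: field_simps)
  have d: "(a + b) / 2 + (b - a) / 2 * cos (cheb_angle q j) - ((a + b) / 2 + (b - a) / 2 * cos (cheb_angle q i))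
     = (b - a) / 2 * (cos (cheb_angle q j) - cos (cheb_angle q i))" by (simp add: algebra_simps)
  show "(y - ((a + b) / 2 + (b - a) / 2 * cos (cheb_angle q i))) /
      ((a + b) / 2 + (b - a) / 2 * cos (cheb_angle q j) - ((a + b) / 2 + (b - a) / 2 * cos (cheb_angle q i)))
      = ((y - (a+b)/2) / ((b-a)/2) - cos (cheb_angle q i)) / (cos (cheb_angle q j) - cos (cheb_angle q i))"
    unfolding n d using r by (rule mult_divide_mult_cancel_left)
qed

lemma sum_abs_lagrange_cheb_le:
  assumes q: "q \<ge> 2" and ab: "a < b" and y: "y \<in> {a..b}"
  shows "(\<Sum>j<q. \<bar>lagrange_cheb q a b j y\<bar>) \<le> 1 + 2 / pi * ln (real q)"
proof -
  define t where "t = (y - (a+b)/2) / ((b-a)/2)"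
  have t: "-1 \<le> t" "t \<le> 1" unfolding t_def using ab y by (auto simp: field_simps)
  show ?thesis using cheb_lebesgue_constant_le[OF q t] unfolding lagrange_cheb_affine[OF ab] t_def .
qed

section \<open>Interpolation error\<close>

lemma abs_prod_minus_cheb_node_le:
  assumes q: "q \<ge> 1" and ab: "a < b" and y: "y \<in> {a..b}"
  shows "\<bar>\<Prod>j<q. (y - cheb_node q a b j)\<bar> \<le> ((b - a) / 2) ^ q / 2 ^ (q - 1)"
proof -
  define r where "r = (b - a) / 2"
  define t where "t = (y - (a+b)/2) / r"
  have r: "r > 0" unfolding r_def using ab by simp
  have t: "-1 \<le> t" "t \<le> 1" unfolding t_def r_def using ab y by (auto simp: field_simps)
  have "(\<Prod>j<q. (y - cheb_node q a b j)) = (\<Prod>j<q. r * (t - cos (cheb_angle q j)))"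
    unfolding cheb_node_eq t_def r_def using ab by (intro prod.cong) (auto simp: field_simps)
  then have "\<bar>\<Prod>j<q. (y - cheb_node q a b j)\<bar> = r ^ q * \<bar>\<Prod>j<q. (t - cos (cheb_angle q j))\<bar>"
    using r by (simp add: prod.distrib abs_mult)
  also have "\<dots> \<le> r ^ q / 2 ^ (q - 1)"
    using mult_left_mono[OF abs_prod_minus_cheb_nodes_le[OF q t], of "r ^ q"] r by simp
  finally show ?thesis unfolding r_def .
qed

text \<open>Admissibility \<open>b - a \<le> a\<close> is what turns the weight \<open>\<eta>^q\<close> of the derivative bound and
  the factor \<open>((b - a)/2)^q\<close> of the node polynomial into the geometric factor \<open>2^(-q)\<close>.\<close>
lemma cheb_interp_error:
  fixes f :: "real \<Rightarrow> real" and D :: "nat \<Rightarrow> real \<Rightarrow> real"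
  assumes q: "q \<ge> 1" and a: "0 < a" "a < b" "b - a \<le> a"
    and D0: "\<And>x. x \<in> {a..b} \<Longrightarrow> D 0 x = f x"
    and der: "\<And>n x. x \<in> {a..b} \<Longrightarrow> (D n has_real_derivative D (Suc n) x) (at x within {a..b})"
    and bnd: "\<And>\<eta>. \<eta> \<in> {a..b} \<Longrightarrow> \<bar>\<eta> ^ q * D q \<eta>\<bar> \<le> fact q * M"
    and y: "y \<in> {a..b}"
  shows "\<bar>f y - (\<Sum>j<q. f (cheb_node q a b j) * lagrange_cheb q a b j y)\<bar> \<le> M / 2 ^ (2 * q - 1)"
proof -
  define r where "r = (b - a) / 2"
  have r: "r > 0" "r / a \<le> 1/2" unfolding r_def using a by auto
  have inj: "inj_on (cheb_node q a b) {..<q}"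
    using a cos_cheb_angle_inj by (auto intro!: inj_onI simp: cheb_node_eq)
  obtain \<eta> where \<eta>: "\<eta> \<in> {a..b}" and eq: "D 0 y - (\<Sum>j<q. D 0 (cheb_node q a b j) * lagrange_cheb q a b j y)
      = D q \<eta> / fact q * (\<Prod>j<q. (y - cheb_node q a b j))"
    using lagrange_interpolation_remainder[where D=D and ys="cheb_node q a b" and q=q,
        OF a(2) q inj cheb_node_in_interval[OF a(2)] der y]
    unfolding lagrange_cheb_def by blast
  have "f y - (\<Sum>j<q. f (cheb_node q a b j) * lagrange_cheb q a b j y)
      = D 0 y - (\<Sum>j<q. D 0 (cheb_node q a b j) * lagrange_cheb q a b j y)"
    using D0 y cheb_node_in_interval[OF a(2)] by simp
  also note eq
  finally have err: "\<bar>f y - (\<Sum>j<q. f (cheb_node q a b j) * lagrange_cheb q a b j y)\<bar>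
      = \<bar>D q \<eta>\<bar> / fact q * \<bar>\<Prod>j<q. (y - cheb_node q a b j)\<bar>"
    by (simp add: abs_mult)
  have node: "\<bar>\<Prod>j<q. (y - cheb_node q a b j)\<bar> \<le> r ^ q / 2 ^ (q - 1)"
    unfolding r_def by (rule abs_prod_minus_cheb_node_le[OF q a(2) y])
  have "a ^ q * \<bar>D q \<eta>\<bar> \<le> \<eta> ^ q * \<bar>D q \<eta>\<bar>" using \<eta> a by (intro mult_right_mono power_mono) auto
  also have "\<dots> \<le> fact q * M" using bnd[OF \<eta>] \<eta> a by (simp add: abs_mult)
  finally have deriv: "\<bar>D q \<eta>\<bar> / fact q \<le> M / a ^ q" using a by (simp add: field_simps)
  have "0 \<le> fact q * M" using order.trans[OF abs_ge_zero bnd[of a]] a by auto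
  then have M0: "M \<ge> 0" using fact_gt_zero[where 'a=real and n=q] by (auto simp: zero_le_mult_iff)
  have "\<bar>D q \<eta>\<bar> / fact q * \<bar>\<Prod>j<q. (y - cheb_node q a b j)\<bar> \<le> M / a ^ q * (r ^ q / 2 ^ (q - 1))"
    using deriv node M0 a by (intro mult_mono) auto
  also have "\<dots> = M * (r / a) ^ q / 2 ^ (q - 1)" by (simp add: power_divide)
  also have "\<dots> \<le> M * (1/2) ^ q / 2 ^ (q - 1)"
    using r a M0 by (intro divide_right_mono mult_left_mono power_mono) auto
  also have "\<dots> = M / 2 ^ (2 * q - 1)"
  proof -
    have "(2::real) ^ q * 2 ^ (q - 1) = 2 ^ (2 * q - 1)" using q by (simp add: power_add[symmetric])
    then show ?thesis by (simp add: power_divide field_simps)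
  qed
  finally show ?thesis unfolding err .
qed

lemma tensor_interp_error_le:
  fixes f :: "real \<Rightarrow> real \<Rightarrow> real" and L M :: "nat \<Rightarrow> real \<Rightarrow> real" and ys \<xi>s :: "nat \<Rightarrow> real"
  assumes nodes: "\<And>j. j < q \<Longrightarrow> ys j \<in> A"
    and err_y: "\<And>y \<xi>. y \<in> A \<Longrightarrow> \<xi> \<in> B \<Longrightarrow> \<bar>f y \<xi> - (\<Sum>j<q. f (ys j) \<xi> * L j y)\<bar> \<le> E"
    and err_\<xi>: "\<And>y \<xi>. y \<in> A \<Longrightarrow> \<xi> \<in> B \<Longrightarrow> \<bar>f y \<xi> - (\<Sum>r<q. f y (\<xi>s r) * M r \<xi>)\<bar> \<le> E"
    and lebesgue: "(\<Sum>j<q. \<bar>L j y\<bar>) \<le> \<Lambda>"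
    and y: "y \<in> A" and \<xi>: "\<xi> \<in> B"
  shows "\<bar>f y \<xi> - (\<Sum>j<q. \<Sum>r<q. L j y * f (ys j) (\<xi>s r) * M r \<xi>)\<bar> \<le> (1 + \<Lambda>) * E"
proof -
  define g where "g j = f (ys j) \<xi> - (\<Sum>r<q. f (ys j) (\<xi>s r) * M r \<xi>)" for j
  have split: "f y \<xi> - (\<Sum>j<q. \<Sum>r<q. L j y * f (ys j) (\<xi>s r) * M r \<xi>)
      = (f y \<xi> - (\<Sum>j<q. f (ys j) \<xi> * L j y)) + (\<Sum>j<q. L j y * g j)"
    unfolding g_def by (simp add: sum_subtractf right_diff_distrib sum_distrib_left mult_ac)
  have interp: "\<bar>\<Sum>j<q. L j y * g j\<bar> \<le> \<Lambda> * E"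
  proof -
    have "\<bar>\<Sum>j<q. L j y * g j\<bar> \<le> (\<Sum>j<q. \<bar>L j y\<bar> * E)"
      using err_\<xi>[OF nodes \<xi>] unfolding g_def
      by (intro order.trans[OF sum_abs] sum_mono) (simp add: abs_mult mult_left_mono)
    also have "\<dots> \<le> \<Lambda> * E"
      using lebesgue order.trans[OF abs_ge_zero err_y[OF y \<xi>]]
      by (simp add: sum_distrib_right[symmetric] mult_right_mono)
    finally show ?thesis .
  qed
  have "\<bar>f y \<xi> - (\<Sum>j<q. \<Sum>r<q. L j y * f (ys j) (\<xi>s r) * M r \<xi>)\<bar>
      \<le> \<bar>f y \<xi> - (\<Sum>j<q. f (ys j) \<xi> * L j y)\<bar> + \<bar>\<Sum>j<q. L j y * g j\<bar>"
    unfolding split by (rule abs_triangle_ineq)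
  also have "\<dots> \<le> E + \<Lambda> * E" using err_y[OF y \<xi>] interp by (rule add_mono)
  finally show ?thesis by (simp add: distrib_right)
qed

lemma asymptotically_smooth_cheb_interp_errors:
  fixes \<kappa> :: "real \<Rightarrow> real \<Rightarrow> real"
  assumes q: "q \<ge> 1" and ab: "0 < a" "a < b" "b - a \<le> a" and cd: "0 < c" "c < d" "d - c \<le> c"
    and "C \<ge> 0" "\<mu> \<ge> 0" "s \<ge> 0"
    and smooth: "asymptotically_smooth {a..b} {c..d} \<kappa> C \<mu> \<nu> s"
    and y: "y \<in> {a..b}" and \<xi>: "\<xi> \<in> {c..d}"
  defines "E \<equiv> C * \<mu> ^ q * real q powr \<nu> * (a * c) powr (- s) / 2 ^ (2 * q - 1)"
  shows "\<bar>\<kappa> y \<xi> - (\<Sum>j<q. \<kappa> (cheb_node q a b j) \<xi> * lagrange_cheb q a b j y)\<bar> \<le> E"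
    and "\<bar>\<kappa> y \<xi> - (\<Sum>r<q. \<kappa> y (cheb_node q c d r) * lagrange_cheb q c d r \<xi>)\<bar> \<le> E"
proof -
  obtain Dy Dx :: "nat \<Rightarrow> real \<Rightarrow> real \<Rightarrow> real" where
    D0: "\<forall>y\<in>{a..b}. \<forall>\<xi>\<in>{c..d}. Dy 0 y \<xi> = \<kappa> y \<xi> \<and> Dx 0 y \<xi> = \<kappa> y \<xi>" and
    der: "\<forall>n. \<forall>y\<in>{a..b}. \<forall>\<xi>\<in>{c..d}.
          ((\<lambda>t. Dy n t \<xi>) has_real_derivative Dy (Suc n) y \<xi>) (at y within {a..b}) \<and>
          ((\<lambda>t. Dx n y t) has_real_derivative Dx (Suc n) y \<xi>) (at \<xi> within {c..d})" and
    bnd: "\<forall>n\<ge>1. \<forall>y\<in>{a..b}. \<forall>\<xi>\<in>{c..d}.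
          \<bar>y ^ n * Dy n y \<xi>\<bar> \<le> C * fact n * \<mu> ^ n * real n powr \<nu> * (y * \<xi>) powr (- s) \<and>
          \<bar>\<xi> ^ n * Dx n y \<xi>\<bar> \<le> C * fact n * \<mu> ^ n * real n powr \<nu> * (y * \<xi>) powr (- s)"
    using smooth unfolding asymptotically_smooth_def by blast
  define M where "M = C * \<mu> ^ q * real q powr \<nu> * (a * c) powr (- s)"
  have M_bound: "\<bar>y ^ q * Dy q y \<xi>\<bar> \<le> fact q * M \<and> \<bar>\<xi> ^ q * Dx q y \<xi>\<bar> \<le> fact q * M"
    if "y \<in> {a..b}" "\<xi> \<in> {c..d}" for y \<xi>
  proof -
    have "(y * \<xi>) powr (- s) \<le> (a * c) powr (- s)"
      using that ab cd \<open>s \<ge> 0\<close> by (intro powr_mono2' mult_mono) auto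
    then have "C * fact q * \<mu> ^ q * real q powr \<nu> * (y * \<xi>) powr (- s) \<le> fact q * M"
      unfolding M_def using \<open>C \<ge> 0\<close> \<open>\<mu> \<ge> 0\<close>
      by (simp add: mult_left_mono mult.assoc mult.left_commute[of "fact q"])
    then show ?thesis using bnd q that by (meson order.trans)
  qed
  have "E = M / 2 ^ (2 * q - 1)" unfolding E_def M_def ..
  then show "\<bar>\<kappa> y \<xi> - (\<Sum>j<q. \<kappa> (cheb_node q a b j) \<xi> * lagrange_cheb q a b j y)\<bar> \<le> E"
    and "\<bar>\<kappa> y \<xi> - (\<Sum>r<q. \<kappa> y (cheb_node q c d r) * lagrange_cheb q c d r \<xi>)\<bar> \<le> E"
    using cheb_interp_error[where D="\<lambda>n t. Dy n t \<xi>" and f="\<lambda>t. \<kappa> t \<xi>", OF q ab _ _ _ y]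
      cheb_interp_error[where D="\<lambda>n t. Dx n y t" and f="\<kappa> y", OF q cd _ _ _ \<xi>]
      D0 der M_bound y \<xi> by auto
qed

theorem theorem3p1:
  fixes q :: nat and a b c d C \<mu> \<nu> s :: real and \<kappa> :: "real \<Rightarrow> real \<Rightarrow> real"
  assumes "q \<ge> 2"
    and "0 < a" and "a < b" and "0 < c" and "c < d"
    and "b - a \<le> a" and "d - c \<le> c"
    and "C \<ge> 0" and "\<mu> \<ge> 0" and "s \<ge> 0"
    and "asymptotically_smooth {a..b} {c..d} \<kappa> C \<mu> \<nu> s"
  shows "\<forall>y\<in>{a..b}. \<forall>\<xi>\<in>{c..d}.
           \<bar>\<kappa> y \<xi> - tensor_interp q a b c d \<kappa> y \<xi>\<bar>
             \<le> C * \<mu> ^ q * real q powr \<nu> / 2 ^ (2 * q - 1) * (2 + 2 / pi * ln (real q))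
                * (a * c) powr (- s)"
proof (intro ballI)
  fix y \<xi> assume y: "y \<in> {a..b}" and \<xi>: "\<xi> \<in> {c..d}"
  define E where "E = C * \<mu> ^ q * real q powr \<nu> * (a * c) powr (- s) / 2 ^ (2 * q - 1)"
  note errors = asymptotically_smooth_cheb_interp_errors[OF _ assms(2,3,6,4,5,7-11), of q,
      folded E_def]
  have "\<bar>\<kappa> y \<xi> - tensor_interp q a b c d \<kappa> y \<xi>\<bar> \<le> (1 + (1 + 2 / pi * ln (real q))) * E"
    unfolding tensor_interp_def
  proof (rule tensor_interp_error_le[where A="{a..b}" and B="{c..d}"])
    show "\<And>j. j < q \<Longrightarrow> cheb_node q a b j \<in> {a..b}" using cheb_node_in_interval assms(3) by blast
    show "(\<Sum>j<q. \<bar>lagrange_cheb q a b j y\<bar>) \<le> 1 + 2 / pi * ln (real q)"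
      by (rule sum_abs_lagrange_cheb_le[OF assms(1,3) y])
  qed (use errors assms(1) y \<xi> in auto)
  also have "\<dots> = C * \<mu> ^ q * real q powr \<nu> / 2 ^ (2 * q - 1) * (2 + 2 / pi * ln (real q)) * (a * c) powr (- s)"
    unfolding E_def by (simp add: field_simps)
  finally show "\<bar>\<kappa> y \<xi> - tensor_interp q a b c d \<kappa> y \<xi>\<bar>
      \<le> C * \<mu> ^ q * real q powr \<nu> / 2 ^ (2 * q - 1) * (2 + 2 / pi * ln (real q)) * (a * c) powr (- s)" .
qed
end
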